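(* Let $\mathcal C$ be a multi-Reedy category such that $\mathcal C(c,d)$ is nonempty for all objects $c,d$ of $\mathcal C$. If $\mathcal C$ (with its underlying Reedy structure) is an EZ-Reedy category, then so is $\Theta\mathcal C$ (with the Reedy structure underlying its multi-Reedy structure described in the context).
   Context: Multimorphisms: for objects $c,d_1,\dots,d_m$ ($m\ge0$) of a small category $\mathcal C$, a multimorphism $c\to d_1,\dots,d_m$ is a tuple $(\alpha_s\colon c\to d_s)_s$ of morphisms; these form a symmetric multicategory $\mathcal C( * )$ (composition by precomposition with a morphism and by postcomposition of each output with a multimorphism, collecting outputs; outputs may be permuted). A multi-Reedy category is a small category $\mathcal C$ with a wide subcategory $\mathcal C^-$, a wide sub-multicategory $\mathcal C^+( * )\subseteq\mathcal C( * )$ and $\deg\colon\mathrm{ob}\,\mathcal C\to\mathbb N$ such that every multimorphism factors uniquely as a morphism of $\mathcal C^-$ followed by a multimorphism of $\mathcal C^+( * )$; every $c\to d_1,\dots,d_m$ in $\mathcal C^+( * )$ has $\deg c\le\sum\deg d_i$; single-output morphisms of $\mathcal C^+( * )$ preserve degree only if identities; morphisms of $\mathcal C^-$ weakly decrease degree, strictly unless identities. Its underlying Reedy structure has inverse subcategory $\mathcal C^-$, direct subcategory $\mathcal C^+=\mathcal C\cap\mathcal C^+( * )$ and the same degree. (A Reedy category: unique factorization $\alpha=\alpha^+\alpha^-$, degree weakly increasing along $\mathcal C^+$, weakly decreasing along $\mathcal C^-$, equality only for identities.) EZ-Reedy: for $\alpha\colon c\to d$ let $\Gamma(\alpha)=\{\beta\colon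 d\to c\mid\alpha\beta=1_d\}$. A Reedy category is EZ-Reedy if every $\sigma\in\mathcal C^-$ has $\Gamma(\sigma)\ne\emptyset$, and any $\sigma,\sigma'\colon c\to d$ in $\mathcal C^-$ with $\Gamma(\sigma)=\Gamma(\sigma')$ are equal. $\Delta$: category of $[n]=\{0<\dots<n\}$ and order-preserving maps; $\Delta^-$: surjections; $\Delta^+( * )$: multimorphisms $(\alpha_s\colon[m]\to[n_s])_s$ forming a monomorphic family. $\Theta\mathcal C$: objects $[m](c_1,\dots,c_m)$, $m\ge0$, $c_i\in\mathrm{ob}\,\mathcal C$; morphisms $[m](c_1,\dots,c_m)\to[n](d_1,\dots,d_n)$ are $(\alpha,\{f_i\})$ with $\alpha\colon[m]\to[n]$ in $\Delta$ and $f_i=(f_{ij}\colon c_i\to d_j)_{\alpha(i-1)<j\le\alpha(i)}$; composition $(\beta,\{g_j\})(\alpha,\{f_i\})=(\beta\alpha,\{h_i\})$ with $h_{ik}=g_{jk}f_{ij}$. Its Reedy structure: $(\Theta\mathcal C)^-$ consists of $(\alpha,\{f_i\})$ with $\alpha\in\Delta^-$ and $f_i\colon c_i\to d_{\alpha(i)}$ in $\mathcal C^-$ whenever $\alpha(i-1)<\alpha(i)$; $(\Theta\mathcal C)^+$ consists of $(\alpha,\{f_i\})$ with $\alpha$ injective (monomorphism in $\Delta$) and each $f_i=(f_{ij})_{\alpha(i-1)<j\le\alpha(i)}$ in $\mathcal C^+( * )$; $\deg([m](c_1,\dots,c_m))=m+\sum_i\deg(c_i)$. *)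

theory Defs
  imports Main "HOL-Library.Multiset"
begin

text \<open>A (small) category: objects, morphisms, domain, codomain,
  composition (Cmp C g f = g o f) and identities.\<close>

record ('o, 'm) cat =
  Ob  :: "'o set"
  Mor :: "'m set"
  Dom :: "'m \<Rightarrow> 'o"
  Cod :: "'m \<Rightarrow> 'o"
  Cmp :: "'m \<Rightarrow> 'm \<Rightarrow> 'm"
  Idn :: "'o \<Rightarrow> 'm"

definition is_cat :: "('o, 'm) cat \<Rightarrow> bool" where
  "is_cat C \<longleftrightarrow>
     (\<forall>f\<in>Mor C. Dom C f \<in> Ob C \<and> Cod C f \<in> Ob C) \<and>
     (\<forall>c\<in>Ob C. Idn C c \<in> Mor C \<and> Dom C (Idn C c) = c \<and> Cod C (Idn C c) = c) \<and>
     (\<forall>f\<in>Mor C. \<forall>g\<in>Mor C. Cod C f = Dom C g \<longrightarrow>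
        Cmp C g f \<in> Mor C \<and> Dom C (Cmp C g f) = Dom C f \<and> Cod C (Cmp C g f) = Cod C g) \<and>
     (\<forall>f\<in>Mor C. Cmp C f (Idn C (Dom C f)) = f \<and> Cmp C (Idn C (Cod C f)) f = f) \<and>
     (\<forall>f\<in>Mor C. \<forall>g\<in>Mor C. \<forall>h\<in>Mor C. Cod C f = Dom C g \<longrightarrow> Cod C g = Dom C h \<longrightarrow>
        Cmp C h (Cmp C g f) = Cmp C (Cmp C h g) f)"

definition hom :: "('o, 'm) cat \<Rightarrow> 'o \<Rightarrow> 'o \<Rightarrow> 'm set" where
  "hom C c d = {f \<in> Mor C. Dom C f = c \<and> Cod C f = d}"

definition wide_subcat :: "('o, 'm) cat \<Rightarrow> 'm set \<Rightarrow> bool" where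
  "wide_subcat C S \<longleftrightarrow> S \<subseteq> Mor C \<and> (\<forall>c\<in>Ob C. Idn C c \<in> S) \<and>
     (\<forall>f\<in>S. \<forall>g\<in>S. Cod C f = Dom C g \<longrightarrow> Cmp C g f \<in> S)"

record ('o, 'm) reedy_str =
  Rminus :: "'m set"
  Rplus  :: "'m set"
  Rdeg   :: "'o \<Rightarrow> nat"

definition is_reedy :: "('o, 'm) cat \<Rightarrow> ('o, 'm) reedy_str \<Rightarrow> bool" where
  "is_reedy C R \<longleftrightarrow> is_cat C \<and> wide_subcat C (Rminus R) \<and> wide_subcat C (Rplus R) \<and>
     (\<forall>f\<in>Mor C.
        (\<exists>p q. q \<in> Rminus R \<and> p \<in> Rplus R \<and> Cod C q = Dom C p \<and> f = Cmp C p q) \<and>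
        (\<forall>p q p' q'. q \<in> Rminus R \<and> p \<in> Rplus R \<and> Cod C q = Dom C p \<and> f = Cmp C p q \<and>
                     q' \<in> Rminus R \<and> p' \<in> Rplus R \<and> Cod C q' = Dom C p' \<and> f = Cmp C p' q'
                     \<longrightarrow> p = p' \<and> q = q')) \<and>
     (\<forall>f\<in>Rplus R. Rdeg R (Dom C f) \<le> Rdeg R (Cod C f) \<and>
        (Rdeg R (Dom C f) = Rdeg R (Cod C f) \<longrightarrow> f = Idn C (Dom C f))) \<and>
     (\<forall>f\<in>Rminus R. Rdeg R (Cod C f) \<le> Rdeg R (Dom C f) \<and>
        (Rdeg R (Cod C f) = Rdeg R (Dom C f) \<longrightarrow> f = Idn C (Dom C f)))"

definition Gamma :: "('o, 'm) cat \<Rightarrow> 'm \<Rightarrow> 'm set" where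
  "Gamma C a = {b \<in> Mor C. Dom C b = Cod C a \<and> Cod C b = Dom C a \<and> Cmp C a b = Idn C (Cod C a)}"

definition is_ez_reedy :: "('o, 'm) cat \<Rightarrow> ('o, 'm) reedy_str \<Rightarrow> bool" where
  "is_ez_reedy C R \<longleftrightarrow> is_reedy C R \<and>
     (\<forall>s\<in>Rminus R. Gamma C s \<noteq> {}) \<and>
     (\<forall>s\<in>Rminus R. \<forall>s'\<in>Rminus R. Dom C s = Dom C s' \<and> Cod C s = Cod C s' \<and>
        Gamma C s = Gamma C s' \<longrightarrow> s = s')"

text \<open>A multimorphism c -> d_1,...,d_m is represented as the pair (c, [a_1,...,a_m])
  of its source and the list of its components a_s : c -> d_s.\<close>

definition is_multimor :: "('o, 'm) cat \<Rightarrow> 'o \<Rightarrow> 'm list \<Rightarrow> bool" where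
  "is_multimor C c fs \<longleftrightarrow> c \<in> Ob C \<and> (\<forall>f\<in>set fs. f \<in> Mor C \<and> Dom C f = c)"

definition postcomp :: "('o, 'm) cat \<Rightarrow> 'm list \<Rightarrow> 'm list list \<Rightarrow> 'm list" where
  "postcomp C fs gss = concat (map2 (\<lambda>f gs. map (\<lambda>g. Cmp C g f) gs) fs gss)"

definition wide_submulticat :: "('o, 'm) cat \<Rightarrow> ('o \<times> 'm list) set \<Rightarrow> bool" where
  "wide_submulticat C P \<longleftrightarrow>
     (\<forall>(c, fs)\<in>P. is_multimor C c fs) \<and>
     (\<forall>c\<in>Ob C. (c, [Idn C c]) \<in> P) \<and>
     (\<forall>(c, fs)\<in>P. \<forall>gss. length gss = length fs \<and>
         (\<forall>i<length fs. (Cod C (fs ! i), gss ! i) \<in> P) \<longrightarrow> (c, postcomp C fs gss) \<in> P) \<and>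
     (\<forall>(c, fs)\<in>P. \<forall>gs. mset gs = mset fs \<longrightarrow> (c, gs) \<in> P)"

record ('o, 'm) mreedy_str =
  Mminus :: "'m set"
  Mplus  :: "('o \<times> 'm list) set"
  Mdeg   :: "'o \<Rightarrow> nat"

definition is_multi_reedy :: "('o, 'm) cat \<Rightarrow> ('o, 'm) mreedy_str \<Rightarrow> bool" where
  "is_multi_reedy C M \<longleftrightarrow> is_cat C \<and> wide_subcat C (Mminus M) \<and> wide_submulticat C (Mplus M) \<and>
     (\<forall>c fs. is_multimor C c fs \<longrightarrow>
        (\<exists>s gs. s \<in> Mminus M \<and> Dom C s = c \<and> (Cod C s, gs) \<in> Mplus M \<and>
                fs = map (\<lambda>g. Cmp C g s) gs) \<and>
        (\<forall>s gs s' gs'. s \<in> Mminus M \<and> Dom C s = c \<and> (Cod C s, gs) \<in> Mplus M \<and>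
                fs = map (\<lambda>g. Cmp C g s) gs \<and>
                s' \<in> Mminus M \<and> Dom C s' = c \<and> (Cod C s', gs') \<in> Mplus M \<and>
                fs = map (\<lambda>g. Cmp C g s') gs' \<longrightarrow> s = s' \<and> gs = gs')) \<and>
     (\<forall>(c, ds)\<in>Mplus M. Mdeg M c \<le> sum_list (map (\<lambda>d. Mdeg M (Cod C d)) ds)) \<and>
     (\<forall>f. (Dom C f, [f]) \<in> Mplus M \<and> Mdeg M (Dom C f) = Mdeg M (Cod C f) \<longrightarrow> f = Idn C (Dom C f)) \<and>
     (\<forall>f\<in>Mminus M. Mdeg M (Cod C f) \<le> Mdeg M (Dom C f) \<and>
        (Mdeg M (Cod C f) = Mdeg M (Dom C f) \<longrightarrow> f = Idn C (Dom C f)))"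

definition underlying_reedy :: "('o, 'm) cat \<Rightarrow> ('o, 'm) mreedy_str \<Rightarrow> ('o, 'm) reedy_str" where
  "underlying_reedy C M =
     \<lparr>Rminus = Mminus M, Rplus = {f. (Dom C f, [f]) \<in> Mplus M}, Rdeg = Mdeg M\<rparr>"

text \<open>An object [m](c_1,...,c_m) is the list [c_1,...,c_m].
  A morphism (alpha, {f_i}) : [m](cs) -> [n](ds) is represented as (cs, ds, a, F), where
  a = [alpha(0),...,alpha(m)] and F = [f_1,...,f_m] with
  f_i = [f_{i,alpha(i-1)+1}, ..., f_{i,alpha(i)}] (0-based: F!i!k : cs!i -> ds!(a!i + k)).\<close>

type_synonym ('o, 'm) tmor = "'o list \<times> 'o list \<times> nat list \<times> 'm list list"

definition theta_mor :: "('o, 'm) cat \<Rightarrow> ('o, 'm) tmor \<Rightarrow> bool" where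
  "theta_mor C phi = (case phi of (cs, ds, a, F) \<Rightarrow>
     set cs \<subseteq> Ob C \<and> set ds \<subseteq> Ob C \<and>
     length a = Suc (length cs) \<and> sorted a \<and> (\<forall>x\<in>set a. x \<le> length ds) \<and>
     length F = length cs \<and>
     (\<forall>i<length cs. length (F ! i) = a ! Suc i - a ! i \<and>
        (\<forall>k<length (F ! i). F ! i ! k \<in> Mor C \<and> Dom C (F ! i ! k) = cs ! i \<and>
                             Cod C (F ! i ! k) = ds ! (a ! i + k))))"

text \<open>(beta,{g_j}) o (alpha,{f_i}) = (beta alpha, {h_i}), h_{ik} = g_{jk} f_{ij}.\<close>
definition theta_comp :: "('o, 'm) cat \<Rightarrow> ('o, 'm) tmor \<Rightarrow> ('o, 'm) tmor \<Rightarrow> ('o, 'm) tmor" where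
  "theta_comp C psi phi = (case phi of (cs, ds, a, F) \<Rightarrow> case psi of (_, es, b, G) \<Rightarrow>
     (cs, es, map (\<lambda>x. b ! x) a,
      map (\<lambda>i. postcomp C (F ! i) (take (a ! Suc i - a ! i) (drop (a ! i) G))) [0..<length cs]))"

definition theta_id :: "('o, 'm) cat \<Rightarrow> 'o list \<Rightarrow> ('o, 'm) tmor" where
  "theta_id C cs = (cs, cs, [0..<Suc (length cs)], map (\<lambda>c. [Idn C c]) cs)"

definition ThetaCat :: "('o, 'm) cat \<Rightarrow> ('o list, ('o, 'm) tmor) cat" where
  "ThetaCat C = \<lparr>Ob = {cs. set cs \<subseteq> Ob C}, Mor = {phi. theta_mor C phi},
                 Dom = (\<lambda>phi. fst phi), Cod = (\<lambda>phi. fst (snd phi)),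
                 Cmp = theta_comp C, Idn = theta_id C\<rparr>"

definition theta_minus :: "('o, 'm) cat \<Rightarrow> ('o, 'm) mreedy_str \<Rightarrow> ('o, 'm) tmor set" where
  "theta_minus C M = {phi. theta_mor C phi \<and> (case phi of (cs, ds, a, F) \<Rightarrow>
     set a = {0..length ds} \<and>
     (\<forall>i<length cs. a ! i < a ! Suc i \<longrightarrow> F ! i ! 0 \<in> Mminus M))}"

definition theta_plus :: "('o, 'm) cat \<Rightarrow> ('o, 'm) mreedy_str \<Rightarrow> ('o, 'm) tmor set" where
  "theta_plus C M = {phi. theta_mor C phi \<and> (case phi of (cs, ds, a, F) \<Rightarrow>
     sorted_wrt (<) a \<and> (\<forall>i<length cs. (cs ! i, F ! i) \<in> Mplus M))}"

definition theta_deg :: "('o, 'm) mreedy_str \<Rightarrow> 'o list \<Rightarrow> nat" where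
  "theta_deg M cs = length cs + sum_list (map (Mdeg M) cs)"

definition ThetaReedy :: "('o, 'm) cat \<Rightarrow> ('o, 'm) mreedy_str \<Rightarrow> ('o list, ('o, 'm) tmor) reedy_str" where
  "ThetaReedy C M = \<lparr>Rminus = theta_minus C M, Rplus = theta_plus C M, Rdeg = theta_deg M\<rparr>"

end

theory Submission
  imports Defs
begin

text \<open>Factoring each \<open>f\<^sub>i\<close> uniquely as a degeneracy of \<open>C\<close> followed by a multimorphism in
  \<open>C\<^sup>+(*)\<close>, and keeping the degeneracies exactly where \<open>\<alpha>\<close> strictly increases, gives the unique
  factorization in \<open>\<Theta>C\<close>; the degree conditions are those of \<open>C\<close> summed over the blocks.

  A section of a degeneracy \<open>(\<alpha>, {\<sigma>\<^sub>i})\<close> of \<open>\<Theta>C\<close> consists of a section \<open>\<beta>\<close> of \<open>\<alpha>\<close> in \<open>\<Delta>\<close>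
  and, over each \<open>j\<close>, a section in \<open>C\<close> of the one \<open>\<sigma>\<^sub>i\<close> hitting \<open>j\<close>; the remaining components
  of the section are arbitrary morphisms, which exist because all hom-sets are nonempty. Hence
  sections exist, and the set of sections determines \<open>\<alpha>\<close> (through the largest and the smallest
  section of \<open>\<alpha>\<close>) as well as every \<open>\<Gamma>(\<sigma>\<^sub>i)\<close>, hence every \<open>\<sigma>\<^sub>i\<close> since \<open>C\<close> is EZ.\<close>

lemma is_catD:
  assumes "is_cat C"
  shows "\<And>f. f \<in> Mor C \<Longrightarrow> Dom C f \<in> Ob C" "\<And>f. f \<in> Mor C \<Longrightarrow> Cod C f \<in> Ob C"
    "\<And>c. c \<in> Ob C \<Longrightarrow> Idn C c \<in> Mor C" "\<And>c. c \<in> Ob C \<Longrightarrow> Dom C (Idn C c) = c"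
    "\<And>c. c \<in> Ob C \<Longrightarrow> Cod C (Idn C c) = c"
    "\<And>f g. f \<in> Mor C \<Longrightarrow> g \<in> Mor C \<Longrightarrow> Cod C f = Dom C g \<Longrightarrow> Cmp C g f \<in> Mor C"
    "\<And>f g. f \<in> Mor C \<Longrightarrow> g \<in> Mor C \<Longrightarrow> Cod C f = Dom C g \<Longrightarrow> Dom C (Cmp C g f) = Dom C f"
    "\<And>f g. f \<in> Mor C \<Longrightarrow> g \<in> Mor C \<Longrightarrow> Cod C f = Dom C g \<Longrightarrow> Cod C (Cmp C g f) = Cod C g"
    "\<And>f. f \<in> Mor C \<Longrightarrow> Cmp C f (Idn C (Dom C f)) = f"
    "\<And>f. f \<in> Mor C \<Longrightarrow> Cmp C (Idn C (Cod C f)) f = f"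
    "\<And>f g h. f \<in> Mor C \<Longrightarrow> g \<in> Mor C \<Longrightarrow> h \<in> Mor C \<Longrightarrow> Cod C f = Dom C g \<Longrightarrow> Cod C g = Dom C h \<Longrightarrow>
        Cmp C h (Cmp C g f) = Cmp C (Cmp C h g) f"
  using assms unfolding is_cat_def by blast+

lemma wide_subcatD:
  assumes "wide_subcat C S"
  shows "\<And>f. f \<in> S \<Longrightarrow> f \<in> Mor C" "\<And>c. c \<in> Ob C \<Longrightarrow> Idn C c \<in> S"
    "\<And>f g. f \<in> S \<Longrightarrow> g \<in> S \<Longrightarrow> Cod C f = Dom C g \<Longrightarrow> Cmp C g f \<in> S"
  using assms unfolding wide_subcat_def by auto

lemma wide_submulticatD:
  assumes "wide_submulticat C P"
  shows "\<And>c fs. (c, fs) \<in> P \<Longrightarrow> is_multimor C c fs" "\<And>c. c \<in> Ob C \<Longrightarrow> (c, [Idn C c]) \<in> P"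
    "\<And>c fs gss. (c, fs) \<in> P \<Longrightarrow> length gss = length fs \<Longrightarrow>
         (\<forall>i<length fs. (Cod C (fs ! i), gss ! i) \<in> P) \<Longrightarrow> (c, postcomp C fs gss) \<in> P"
  using assms unfolding wide_submulticat_def by auto

lemma multi_reedyD:
  assumes "is_multi_reedy C M"
  shows "is_cat C" "wide_subcat C (Mminus M)" "wide_submulticat C (Mplus M)"
  using assms unfolding is_multi_reedy_def by auto

lemma multi_reedy_factorization:
  assumes "is_multi_reedy C M" "is_multimor C c fs"
  shows "\<exists>s gs. s \<in> Mminus M \<and> Dom C s = c \<and> (Cod C s, gs) \<in> Mplus M \<and> fs = map (\<lambda>g. Cmp C g s) gs"
  using assms unfolding is_multi_reedy_def by blast

lemma multi_reedy_factorization_unique: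
  assumes "is_multi_reedy C M" "is_multimor C c fs"
    "s \<in> Mminus M" "Dom C s = c" "(Cod C s, gs) \<in> Mplus M" "fs = map (\<lambda>g. Cmp C g s) gs"
    "s' \<in> Mminus M" "Dom C s' = c" "(Cod C s', gs') \<in> Mplus M" "fs = map (\<lambda>g. Cmp C g s') gs'"
  shows "s = s' \<and> gs = gs'"
  using assms unfolding is_multi_reedy_def by blast

lemma multi_reedy_Mplus_deg:
  assumes "is_multi_reedy C M" "(c, fs) \<in> Mplus M"
  shows "Mdeg M c \<le> sum_list (map (\<lambda>f. Mdeg M (Cod C f)) fs)"
  using assms unfolding is_multi_reedy_def by auto

lemma multi_reedy_Mplus_deg_eq:
  assumes "is_multi_reedy C M" "(Dom C f, [f]) \<in> Mplus M" "Mdeg M (Dom C f) = Mdeg M (Cod C f)"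
  shows "f = Idn C (Dom C f)"
  using assms unfolding is_multi_reedy_def by auto

lemma multi_reedy_Mminus_deg:
  assumes "is_multi_reedy C M" "f \<in> Mminus M"
  shows "Mdeg M (Cod C f) \<le> Mdeg M (Dom C f)"
    and "Mdeg M (Cod C f) = Mdeg M (Dom C f) \<Longrightarrow> f = Idn C (Dom C f)"
  using assms unfolding is_multi_reedy_def by auto

lemma GammaD:
  assumes "g \<in> Gamma C s"
  shows "g \<in> Mor C" "Dom C g = Cod C s" "Cod C g = Dom C s" "Cmp C s g = Idn C (Cod C s)"
  using assms by (auto simp: Gamma_def)

lemma ThetaCat_simps:
  "Ob (ThetaCat C) = {cs. set cs \<subseteq> Ob C}" "Mor (ThetaCat C) = {phi. theta_mor C phi}"
  "Dom (ThetaCat C) = fst" "Cod (ThetaCat C) = (\<lambda>phi. fst (snd phi))"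
  "Cmp (ThetaCat C) = theta_comp C" "Idn (ThetaCat C) = theta_id C"
  by (simp_all add: ThetaCat_def)

lemma ThetaReedy_simps:
  "Rminus (ThetaReedy C M) = theta_minus C M" "Rplus (ThetaReedy C M) = theta_plus C M"
  "Rdeg (ThetaReedy C M) = theta_deg M"
  by (simp_all add: ThetaReedy_def)

lemma Gamma_ThetaCat_iff:
  "g \<in> Gamma (ThetaCat C) s \<longleftrightarrow> theta_mor C g \<and> fst g = fst (snd s) \<and>
     fst (snd g) = fst s \<and> theta_comp C s g = theta_id C (fst (snd s))"
  by (simp add: Gamma_def ThetaCat_def)

lemma theta_mor_iff: "theta_mor C (cs, ds, a, F) \<longleftrightarrow>
     set cs \<subseteq> Ob C \<and> set ds \<subseteq> Ob C \<and>
     length a = Suc (length cs) \<and> sorted a \<and> (\<forall>x\<in>set a. x \<le> length ds) \<and>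
     length F = length cs \<and>
     (\<forall>i<length cs. length (F ! i) = a ! Suc i - a ! i \<and>
        (\<forall>k<length (F ! i). F ! i ! k \<in> Mor C \<and> Dom C (F ! i ! k) = cs ! i \<and>
                             Cod C (F ! i ! k) = ds ! (a ! i + k)))"
  by (simp add: theta_mor_def)

lemma theta_morD:
  assumes "theta_mor C (cs, ds, a, F)"
  shows "set cs \<subseteq> Ob C" "set ds \<subseteq> Ob C" "length a = Suc (length cs)" "sorted a"
    "\<And>x. x \<le> length cs \<Longrightarrow> a!x \<le> length ds" "length F = length cs"
    "\<And>i. i < length cs \<Longrightarrow> length (F ! i) = a ! Suc i - a ! i"
    "\<And>i k. i < length cs \<Longrightarrow> k < a ! Suc i - a ! i \<Longrightarrow> F ! i ! k \<in> Mor C"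
    "\<And>i k. i < length cs \<Longrightarrow> k < a ! Suc i - a ! i \<Longrightarrow> Dom C (F ! i ! k) = cs ! i"
    "\<And>i k. i < length cs \<Longrightarrow> k < a ! Suc i - a ! i \<Longrightarrow> Cod C (F ! i ! k) = ds ! (a ! i + k)"
  using assms unfolding theta_mor_iff by auto

lemma theta_mor_multimor:
  assumes "theta_mor C (cs, ds, a, F)" "i < length cs"
  shows "is_multimor C (cs!i) (F!i)"
  using theta_morD[OF assms(1)] assms(2) unfolding is_multimor_def by (auto simp: in_set_conv_nth subset_iff)

lemma theta_minus_iff: "(cs, ds, a, F) \<in> theta_minus C M \<longleftrightarrow> theta_mor C (cs, ds, a, F) \<and>
     set a = {0..length ds} \<and> (\<forall>i<length cs. a ! i < a ! Suc i \<longrightarrow> F ! i ! 0 \<in> Mminus M)"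
  by (simp add: theta_minus_def)

lemma theta_plus_iff: "(cs, ds, a, F) \<in> theta_plus C M \<longleftrightarrow> theta_mor C (cs, ds, a, F) \<and>
     sorted_wrt (<) a \<and> (\<forall>i<length cs. (cs ! i, F ! i) \<in> Mplus M)"
  by (simp add: theta_plus_def)

section \<open>Composition in \<open>\<Theta>C\<close>\<close>

lemma postcomp_Nil [simp]: "postcomp C [] gss = []"
  by (simp add: postcomp_def)

lemma postcomp_Cons [simp]: "postcomp C (f # fs) (gs # gss) = map (\<lambda>g. Cmp C g f) gs @ postcomp C fs gss"
  by (simp add: postcomp_def)

lemma postcomp_nth:
  assumes "length gss = length fs" "length fs < length b" "sorted b"
    "\<forall>j<length fs. length (gss!j) = b!Suc j - b!j"
  shows "length (postcomp C fs gss) = b!length fs - b!0 \<and>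
   (\<forall>j<length fs. \<forall>l<length (gss!j). postcomp C fs gss ! (b!j - b!0 + l) = Cmp C (gss!j!l) (fs!j))"
  using assms
proof (induction fs arbitrary: gss b)
  case Nil
  then show ?case by simp
next
  case (Cons f fs)
  obtain gs gss' where g: "gss = gs # gss'" using Cons.prems(1) by (cases gss) auto
  obtain b0 b' where bb: "b = b0 # b'" using Cons.prems(2) by (cases b) auto
  have lb: "length fs < length b'" using Cons.prems(2) bb by simp
  have "\<forall>j<length fs. length (gss'!j) = b'!Suc j - b'!j"
    using Cons.prems(4) g bb by (metis Suc_less_eq length_Cons nth_Cons_Suc)
  with Cons.prems(1,3) g bb lb have IH: "length (postcomp C fs gss') = b'!length fs - b'!0"
    "\<forall>j<length fs. \<forall>l<length (gss'!j). postcomp C fs gss' ! (b'!j - b'!0 + l) = Cmp C (gss'!j!l) (fs!j)"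
    using Cons.IH[of gss' b'] by auto
  have len0: "length gs = b'!0 - b0" using Cons.prems(4)[rule_format, of 0] g bb by simp
  have b0le: "b0 \<le> b'!0" using Cons.prems(3) bb lb by (cases b') auto
  have mono: "\<And>j. j < length b' \<Longrightarrow> b'!0 \<le> b'!j" using Cons.prems(3) bb by (simp add: sorted_nth_mono)
  have "length (postcomp C (f#fs) gss) = b!length (f#fs) - b!0"
    using IH g bb len0 b0le mono[of "length fs"] lb by simp
  moreover have "postcomp C (f#fs) gss ! (b!j - b!0 + l) = Cmp C (gss!j!l) ((f#fs)!j)"
    if j: "j < length (f#fs)" and l: "l < length (gss!j)" for j l
  proof (cases j)
    case 0
    then show ?thesis using l g bb by (simp add: nth_append)
  next
    case (Suc j')
    have j': "j' < length fs" using j Suc by simp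
    have "b'!0 \<le> b'!j'" using mono[of j'] j' lb by simp
    then have eq: "b!j - b!0 + l = length gs + (b'!j' - b'!0 + l)" using Suc bb len0 b0le by simp
    show ?thesis using IH j' l Suc g unfolding eq by (simp add: nth_append)
  qed
  ultimately show ?case by blast
qed

lemma sorted_interval_decomp:
  fixes b :: "nat list"
  assumes "sorted b" "p \<le> q" "q < length b" "k < b!q - b!p"
  shows "\<exists>j. p \<le> j \<and> j < q \<and> b!j - b!p \<le> k \<and> k < b!Suc j - b!p"
  using assms
proof (induction q)
  case 0
  then show ?case by simp
next
  case (Suc q)
  show ?case
  proof (cases "p \<le> q \<and> k < b!q - b!p")
    case True
    then show ?thesis using Suc by (metis Suc_lessD less_SucI)
  next
    case False
    have "p \<le> q" using False Suc.prems
      by (metis diff_is_0_eq' le_SucE less_nat_zero_code order.refl)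
    then have "b!q - b!p \<le> k" using False by simp
    then show ?thesis using \<open>p \<le> q\<close> Suc.prems by auto
  qed
qed

definition theta_block :: "('o,'m) cat \<Rightarrow> nat list \<Rightarrow> 'm list list \<Rightarrow> 'm list list \<Rightarrow> nat \<Rightarrow> 'm list" where
  "theta_block C a F G i = postcomp C (F!i) (take (a!Suc i - a!i) (drop (a!i) G))"

lemma theta_comp_eq: "theta_comp C (ds', es, b, G) (cs, ds, a, F) =
   (cs, es, map (\<lambda>x. b!x) a, map (theta_block C a F G) [0..<length cs])"
  by (simp add: theta_comp_def theta_block_def)

lemma theta_block:
  assumes phi: "theta_mor C (cs, ds, a, F)" and psi: "theta_mor C (ds, es, b, G)" and i: "i < length cs"
  shows theta_block_length: "length (theta_block C a F G i) = b!(a!Suc i) - b!(a!i)"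
    and theta_block_nth: "a!i \<le> j \<Longrightarrow> j < a!Suc i \<Longrightarrow> l < b!Suc j - b!j \<Longrightarrow>
       theta_block C a F G i ! (b!j - b!(a!i) + l) = Cmp C (G!j!l) (F!i!(j - a!i))"
proof -
  note P = theta_morD[OF phi] and Q = theta_morD[OF psi]
  have ai: "a!i \<le> a!Suc i" using P(3,4) i by (simp add: sorted_nth_mono)
  have asi: "a!Suc i \<le> length ds" using P(5) i by simp
  let ?gss = "take (a!Suc i - a!i) (drop (a!i) G)"
  let ?b = "drop (a!i) b"
  have l1: "length ?gss = length (F!i)" using P(7)[OF i] Q(6) asi by simp
  have l2: "length (F!i) < length ?b" using P(7)[OF i] Q(3) asi ai by simp
  have l3: "sorted ?b" using Q(4) by (simp add: sorted_wrt_drop)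
  have l4: "\<forall>j<length (F!i). length (?gss!j) = ?b!Suc j - ?b!j"
  proof (intro allI impI)
    fix j assume "j < length (F!i)"
    then have "a!i + j < length ds" using P(7)[OF i] asi by simp
    then show "length (?gss!j) = ?b!Suc j - ?b!j" using Q(7)[of "a!i+j"] Q(3) Q(6) \<open>j < length (F!i)\<close> P(7)[OF i]
      by (simp add: add.commute)
  qed
  note R = postcomp_nth[OF l1 l2 l3 l4, of C]
  show "length (theta_block C a F G i) = b!(a!Suc i) - b!(a!i)"
    using R P(7)[OF i] ai asi Q(3) by (simp add: theta_block_def)
  assume j1: "a!i \<le> j" and j2: "j < a!Suc i" and l: "l < b!Suc j - b!j"
  have jj: "j - a!i < length (F!i)" using j1 j2 P(7)[OF i] by simp
  have ll: "l < length (?gss ! (j - a!i))" using l j1 j2 asi Q(6) Q(7)[of j] by simp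
  have "postcomp C (F!i) ?gss ! (?b!(j - a!i) - ?b!0 + l) = Cmp C (?gss!(j - a!i)!l) (F!i!(j - a!i))"
    using R jj ll by blast
  moreover have "?b!(j - a!i) = b!j" "?b!0 = b!(a!i)" using j1 j2 asi Q(3) by auto
  moreover have "?gss!(j - a!i) = G!j" using j1 j2 asi Q(6) by simp
  ultimately show "theta_block C a F G i ! (b!j - b!(a!i) + l) = Cmp C (G!j!l) (F!i!(j - a!i))"
    by (simp add: theta_block_def)
qed

lemma theta_block_entry:
  assumes phi: "theta_mor C (cs, ds, a, F)" and psi: "theta_mor C (ds, es, b, G)" and i: "i < length cs"
    and k: "k < b!(a!Suc i) - b!(a!i)"
  obtains j l where "a!i \<le> j" "j < a!Suc i" "j < length ds" "l < b!Suc j - b!j" "k = b!j - b!(a!i) + l"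
    "b!(a!i) + k = b!j + l" "theta_block C a F G i ! k = Cmp C (G!j!l) (F!i!(j - a!i))"
proof -
  note P = theta_morD[OF phi] and Q = theta_morD[OF psi]
  have ai: "a!i \<le> a!Suc i" using P(3,4) i by (simp add: sorted_nth_mono)
  have asi: "a!Suc i \<le> length ds" using P(5) i by simp
  obtain j where j: "a!i \<le> j" "j < a!Suc i" "b!j - b!(a!i) \<le> k" "k < b!Suc j - b!(a!i)"
    using sorted_interval_decomp[OF Q(4) ai, of k] k asi Q(3) by auto
  have m1: "b!(a!i) \<le> b!j" "b!j \<le> b!Suc j" using Q(3,4) j asi by (auto simp: sorted_nth_mono)
  define l where "l = k - (b!j - b!(a!i))"
  have l: "l < b!Suc j - b!j" "k = b!j - b!(a!i) + l" "b!(a!i) + k = b!j + l" using j m1 unfolding l_def by auto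
  show ?thesis using that[OF j(1,2) _ l(1,2,3)] theta_block_nth[OF phi psi i j(1,2) l(1)] l j asi by simp
qed

lemma theta_comp_mor:
  assumes cat: "is_cat C" and phi: "theta_mor C (cs, ds, a, F)" and psi: "theta_mor C (ds, es, b, G)"
  shows "theta_mor C (theta_comp C (ds, es, b, G) (cs, ds, a, F))"
proof -
  note P = theta_morD[OF phi] and Q = theta_morD[OF psi] and K = is_catD[OF cat]
  have sorted: "sorted (map (\<lambda>x. b!x) a)"
    unfolding sorted_iff_nth_mono
  proof (intro allI impI)
    fix i j assume ij: "i \<le> j" "j < length (map (\<lambda>x. b!x) a)"
    then have "a!i \<le> a!j" "a!j \<le> length ds" using P(3,4,5) by (auto simp: sorted_nth_mono)
    then show "map (\<lambda>x. b!x) a ! i \<le> map (\<lambda>x. b!x) a ! j" using ij Q(3,4) by (simp add: sorted_nth_mono)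
  qed
  have bounded: "\<forall>x\<in>set (map (\<lambda>x. b!x) a). x \<le> length es"
    using P(3,5) Q(3,5) by (auto simp: in_set_conv_nth)
  have blocks: "\<forall>i<length cs. length (theta_block C a F G i) = b!(a!Suc i) - b!(a!i) \<and>
        (\<forall>k<length (theta_block C a F G i). theta_block C a F G i ! k \<in> Mor C \<and>
           Dom C (theta_block C a F G i ! k) = cs ! i \<and> Cod C (theta_block C a F G i ! k) = es ! (b!(a!i) + k))"
  proof (intro allI impI conjI)
    fix i assume i: "i < length cs"
    show L: "length (theta_block C a F G i) = b!(a!Suc i) - b!(a!i)" by (rule theta_block_length[OF phi psi i])
    fix k assume "k < length (theta_block C a F G i)"
    then obtain j l where jl: "a!i \<le> j" "j < a!Suc i" "j < length ds" "l < b!Suc j - b!j"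
      "b!(a!i) + k = b!j + l" "theta_block C a F G i ! k = Cmp C (G!j!l) (F!i!(j - a!i))"
      using theta_block_entry[OF phi psi i] L by metis
    have jk: "j - a!i < a!Suc i - a!i" using jl by simp
    have f: "F!i!(j - a!i) \<in> Mor C" "Dom C (F!i!(j - a!i)) = cs!i" "Cod C (F!i!(j - a!i)) = ds!j"
      using P(8,9,10)[OF i jk] jl by auto
    have g: "G!j!l \<in> Mor C" "Dom C (G!j!l) = ds!j" "Cod C (G!j!l) = es!(b!j + l)"
      using Q(8,9,10)[OF jl(3) jl(4)] by auto
    show "theta_block C a F G i ! k \<in> Mor C" "Dom C (theta_block C a F G i ! k) = cs ! i"
      "Cod C (theta_block C a F G i ! k) = es ! (b!(a!i) + k)"
      using jl(5,6) K(6,7,8) f g by simp_all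
  qed
  show ?thesis unfolding theta_comp_eq theta_mor_iff
    using P(1,3,6) Q(2) sorted bounded blocks by simp
qed

lemma theta_id_mor:
  assumes cat: "is_cat C" and cs: "set cs \<subseteq> Ob C"
  shows "theta_mor C (theta_id C cs)"
proof -
  have "\<forall>i<length cs. cs!i \<in> Ob C" using cs by auto
  then show ?thesis
    using cs is_catD(3,4,5)[OF cat] unfolding theta_id_def theta_mor_iff
    by (auto simp del: upt_Suc simp: nth_Cons')
qed

lemma theta_comp_theta_id:
  assumes cat: "is_cat C" and phi: "theta_mor C (cs, ds, a, F)"
  shows "theta_comp C (cs, ds, a, F) (theta_id C cs) = (cs, ds, a, F)"
proof -
  note P = theta_morD[OF phi] and K = is_catD[OF cat]
  let ?I = "map (\<lambda>c. [Idn C c]) cs"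
  have "map (\<lambda>x. a!x) [0..<Suc (length cs)] = a" using P(3) by (metis map_nth)
  moreover have "map (theta_block C [0..<Suc (length cs)] ?I F) [0..<length cs] = F"
  proof (rule nth_equalityI)
    fix i assume "i < length (map (theta_block C [0..<Suc (length cs)] ?I F) [0..<length cs])"
    then have i: "i < length cs" by simp
    have t: "take (Suc i - i) (drop i F) = [F!i]" using i P(6)
      by (simp flip: Cons_nth_drop_Suc)
    have "map (\<lambda>g. Cmp C g (Idn C (cs!i))) (F!i) = F!i"
    proof (rule nth_equalityI)
      fix k assume "k < length (map (\<lambda>g. Cmp C g (Idn C (cs!i))) (F!i))"
      then have k: "k < a ! Suc i - a ! i" using P(7)[OF i] by simp
      show "map (\<lambda>g. Cmp C g (Idn C (cs!i))) (F!i) ! k = F!i!k"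
        using K(9)[OF P(8)[OF i k]] P(9)[OF i k] k P(7)[OF i] by simp
    qed simp
    then show "map (theta_block C [0..<Suc (length cs)] ?I F) [0..<length cs] ! i = F ! i"
      using i t by (simp add: theta_block_def nth_append del: upt_Suc)
  qed (use P(6) in simp)
  ultimately show ?thesis unfolding theta_id_def theta_comp_eq by simp
qed

lemma theta_id_theta_comp:
  assumes cat: "is_cat C" and phi: "theta_mor C (cs, ds, a, F)"
  shows "theta_comp C (theta_id C ds) (cs, ds, a, F) = (cs, ds, a, F)"
proof -
  note P = theta_morD[OF phi] and K = is_catD[OF cat]
  let ?u = "[0..<Suc (length ds)]" and ?I = "map (\<lambda>c. [Idn C c]) ds"
  have psi: "theta_mor C (ds, ds, ?u, ?I)"
    using theta_id_mor[OF cat P(2)] unfolding theta_id_def .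
  have "map (\<lambda>x. ?u!x) a = a"
  proof (rule nth_equalityI)
    fix i assume "i < length (map (\<lambda>x. ?u!x) a)"
    then have "a!i \<le> length ds" using P(3,5) by simp
    then show "map (\<lambda>x. ?u!x) a ! i = a!i" using \<open>i < _\<close> by (simp del: upt_Suc)
  qed simp
  moreover have "map (theta_block C a F ?I) [0..<length cs] = F"
  proof (rule nth_equalityI)
    fix i assume "i < length (map (theta_block C a F ?I) [0..<length cs])"
    then have i: "i < length cs" by simp
    have ai: "a!i \<le> a!Suc i" "a!Suc i \<le> length ds" using P(3,4,5) i by (auto simp: sorted_nth_mono)
    have L: "length (theta_block C a F ?I i) = length (F!i)"
      using theta_block_length[OF phi psi i] P(7)[OF i] ai by (simp del: upt_Suc)
    have "theta_block C a F ?I i = F!i"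
    proof (rule nth_equalityI[OF L])
      fix k assume "k < length (theta_block C a F ?I i)"
      then have k: "k < a ! Suc i - a ! i" using L P(7)[OF i] by simp
      have j: "a!i \<le> a!i + k" "a!i + k < a!Suc i" "0 < ?u!Suc (a!i + k) - ?u!(a!i + k)"
        using k ai by (auto simp del: upt_Suc)
      have "theta_block C a F ?I i ! (?u!(a!i+k) - ?u!(a!i) + 0) = Cmp C (?I ! (a!i+k) ! 0) (F!i!(a!i + k - a!i))"
        by (rule theta_block_nth[OF phi psi i j])
      moreover have "?u!(a!i+k) - ?u!(a!i) + 0 = k"
        using k ai by (simp del: upt_Suc)
      ultimately show "theta_block C a F ?I i ! k = F!i!k"
        using K(10)[OF P(8)[OF i k]] P(10)[OF i k] k ai by simp
    qed
    then show "map (theta_block C a F ?I) [0..<length cs] ! i = F ! i" using i by simp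
  qed (use P(6) in simp)
  ultimately show ?thesis unfolding theta_id_def theta_comp_eq by simp
qed

text \<open>An entry of the \<open>i\<close>-th block of \<open>\<chi>(\<psi>\<phi>)\<close> is \<open>K!j'!l \<circ> G!j!l' \<circ> F!i!_\<close>; regrouping it as
  \<open>(K!j'!l \<circ> G!j!l') \<circ> F!i!_\<close> locates it in the \<open>i\<close>-th block of \<open>(\<chi>\<psi>)\<phi>\<close>.\<close>
lemma theta_block_assoc:
  assumes cat: "is_cat C" and phi: "theta_mor C (cs, ds, a, F)" and psi: "theta_mor C (ds, es, b, G)"
    and chi: "theta_mor C (es, fs, c, K)" and i: "i < length cs"
  shows "theta_block C (map (\<lambda>x. b!x) a) (map (theta_block C a F G) [0..<length cs]) K i =
         theta_block C a F (map (theta_block C b G K) [0..<length ds]) i"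
proof -
  note P = theta_morD[OF phi] and Q = theta_morD[OF psi] and R = theta_morD[OF chi] and Ct = is_catD[OF cat]
  define ba where "ba = map (\<lambda>x. b!x) a"
  define cb where "cb = map (\<lambda>x. c!x) b"
  define H1 where "H1 = map (theta_block C a F G) [0..<length cs]"
  define H2 where "H2 = map (theta_block C b G K) [0..<length ds]"
  have m1: "theta_mor C (cs, es, ba, H1)" using theta_comp_mor[OF cat phi psi]
    unfolding theta_comp_eq ba_def H1_def .
  have m2: "theta_mor C (ds, fs, cb, H2)" using theta_comp_mor[OF cat psi chi]
    unfolding theta_comp_eq cb_def H2_def .
  have ai: "a!i \<le> a!Suc i" "a!Suc i \<le> length ds" using P(3,4,5) i by (auto simp: sorted_nth_mono)
  have baeq: "ba!i = b!(a!i)" "ba!Suc i = b!(a!Suc i)" using i P(3) unfolding ba_def by auto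
  have cbeq: "\<And>x. x \<le> length ds \<Longrightarrow> cb!x = c!(b!x)" unfolding cb_def using Q(3) by auto
  have L1: "length (theta_block C ba H1 K i) = c!(b!(a!Suc i)) - c!(b!(a!i))"
    using theta_block_length[OF m1 chi i] baeq by simp
  have L2: "length (theta_block C a F H2 i) = c!(b!(a!Suc i)) - c!(b!(a!i))"
    using theta_block_length[OF phi m2 i] cbeq ai by simp
  have "theta_block C ba H1 K i = theta_block C a F H2 i"
  proof (rule nth_equalityI)
    show "length (theta_block C ba H1 K i) = length (theta_block C a F H2 i)" using L1 L2 by simp
    fix k assume "k < length (theta_block C ba H1 K i)"
    then have k: "k < c!(ba!Suc i) - c!(ba!i)" using L1 baeq by simp
    obtain j' l where A: "ba!i \<le> j'" "j' < ba!Suc i" "j' < length es" "l < c!Suc j' - c!j'"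
       "k = c!j' - c!(ba!i) + l" "theta_block C ba H1 K i ! k = Cmp C (K!j'!l) (H1!i!(j' - ba!i))"
      by (rule theta_block_entry[OF m1 chi i k])
    have k2: "j' - ba!i < b!(a!Suc i) - b!(a!i)" using A baeq by simp
    obtain j l' where B: "a!i \<le> j" "j < a!Suc i" "j < length ds" "l' < b!Suc j - b!j"
       "b!(a!i) + (j' - ba!i) = b!j + l'" "theta_block C a F G i ! (j' - ba!i) = Cmp C (G!j!l') (F!i!(j - a!i))"
      by (rule theta_block_entry[OF phi psi i k2])
    have jj': "j' = b!j + l'" using B(5) A(1) baeq by simp
    have sj: "Suc j \<le> length ds" using B by simp
    have "b!j \<le> length es" "b!Suc j \<le> length es" "Suc j' \<le> b!Suc j" "b!(a!i) \<le> b!j"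
      using Q(3,4,5) B sj jj' by (auto simp: sorted_nth_mono)
    then have m3: "c!j' \<le> c!Suc j'" "c!(b!j) \<le> c!j'" "c!Suc j' \<le> c!(b!Suc j)" "c!(b!(a!i)) \<le> c!(b!j)"
      using R(3,4) jj' A(3) by (auto simp: sorted_nth_mono)
    define l'' where "l'' = c!j' - c!(b!j) + l"
    have l''1: "l'' < cb!Suc j - cb!j" unfolding l''_def using cbeq[of j] cbeq[OF sj] m3 A(4) sj by simp
    have R1: "theta_block C a F H2 i ! (cb!j - cb!(a!i) + l'') = Cmp C (H2!j!l'') (F!i!(j - a!i))"
      by (rule theta_block_nth[OF phi m2 i B(1,2) l''1])
    have idxk: "cb!j - cb!(a!i) + l'' = k" unfolding l''_def using cbeq[of j] cbeq[of "a!i"] ai B(3) m3 A(5) baeq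
      by simp
    have jl1: "b!j \<le> j'" "j' < b!Suc j" using jj' B(4) by auto
    have R2: "theta_block C b G K j ! (c!j' - c!(b!j) + l) = Cmp C (K!j'!l) (G!j!(j' - b!j))"
      by (rule theta_block_nth[OF psi chi B(3) jl1 A(4)])
    have fF: "F!i!(j - a!i) \<in> Mor C" "Cod C (F!i!(j - a!i)) = ds!j"
      using P(8,10)[OF i, of "j - a!i"] B by auto
    have gG: "G!j!l' \<in> Mor C" "Dom C (G!j!l') = ds!j" "Cod C (G!j!l') = es!j'"
      using Q(8,9,10)[OF B(3) B(4)] jj' by auto
    have kK: "K!j'!l \<in> Mor C" "Dom C (K!j'!l) = es!j'"
      using R(8,9)[OF A(3,4)] by auto
    have "theta_block C ba H1 K i ! k = Cmp C (K!j'!l) (Cmp C (G!j!l') (F!i!(j - a!i)))"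
      using A(6) B(6) i unfolding H1_def by simp
    also have "\<dots> = Cmp C (Cmp C (K!j'!l) (G!j!l')) (F!i!(j - a!i))"
      using Ct(11)[OF fF(1) gG(1) kK(1)] fF gG kK by simp
    also have "\<dots> = theta_block C a F H2 i ! k"
      using R1 R2 B(3) idxk jj' unfolding l''_def H2_def by simp
    finally show "theta_block C ba H1 K i ! k = theta_block C a F H2 i ! k" .
  qed
  then show ?thesis unfolding ba_def H1_def H2_def .
qed

lemma theta_comp_assoc:
  assumes cat: "is_cat C" and phi: "theta_mor C (cs, ds, a, F)" and psi: "theta_mor C (ds, es, b, G)"
    and chi: "theta_mor C (es, fs, c, K)"
  shows "theta_comp C (es, fs, c, K) (theta_comp C (ds, es, b, G) (cs, ds, a, F)) =
         theta_comp C (theta_comp C (es, fs, c, K) (ds, es, b, G)) (cs, ds, a, F)"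
proof -
  note P = theta_morD[OF phi] and Q = theta_morD[OF psi]
  have "map (\<lambda>x. c!x) (map (\<lambda>x. b!x) a) = map (\<lambda>x. map (\<lambda>x. c!x) b ! x) a"
  proof (rule nth_equalityI)
    fix i assume "i < length (map (\<lambda>x. c!x) (map (\<lambda>x. b!x) a))"
    then have "a!i < length b" using P(3,5) Q(3) by (simp add: less_Suc_eq_le)
    then show "map (\<lambda>x. c!x) (map (\<lambda>x. b!x) a) ! i = map (\<lambda>x. map (\<lambda>x. c!x) b ! x) a ! i"
      using \<open>i < _\<close> by simp
  qed simp
  then show ?thesis
    unfolding theta_comp_eq using theta_block_assoc[OF cat phi psi chi] by simp
qed

lemma is_cat_ThetaCat:
  assumes cat: "is_cat C"
  shows "is_cat (ThetaCat C)"
  unfolding is_cat_def ThetaCat_simps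
proof (intro conjI ballI impI)
  fix f g h assume f: "f \<in> {phi. theta_mor C phi}" and g: "g \<in> {phi. theta_mor C phi}"
  obtain cs ds a F where fe: "f = (cs, ds, a, F)" by (cases f) auto
  obtain ds' es b G where ge: "g = (ds', es, b, G)" by (cases g) auto
  show "fst f \<in> {cs. set cs \<subseteq> Ob C}" "fst (snd f) \<in> {cs. set cs \<subseteq> Ob C}"
    using f fe by (auto simp: theta_mor_iff)
  show "theta_comp C f (theta_id C (fst f)) = f" "theta_comp C (theta_id C (fst (snd f))) f = f"
    using theta_comp_theta_id[OF cat] theta_id_theta_comp[OF cat] f fe by simp_all
  assume fg: "fst (snd f) = fst g"
  then have "ds' = ds" using fe ge by simp
  then show "theta_comp C g f \<in> {phi. theta_mor C phi}" "fst (theta_comp C g f) = fst f"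
    "fst (snd (theta_comp C g f)) = fst (snd g)"
    using theta_comp_mor[OF cat, of cs ds a F es b G] f g fe ge by (simp_all add: theta_comp_eq)
  assume h: "h \<in> {phi. theta_mor C phi}" and gh: "fst (snd g) = fst h"
  obtain es' fs c K where he: "h = (es', fs, c, K)" by (cases h) auto
  show "theta_comp C h (theta_comp C g f) = theta_comp C (theta_comp C h g) f"
    using theta_comp_assoc[OF cat, of cs ds a F es b G fs c K] f g h fg gh fe ge he by simp
next
  fix cs assume "cs \<in> {cs. set cs \<subseteq> Ob C}"
  then show "theta_id C cs \<in> {phi. theta_mor C phi}" "fst (theta_id C cs) = cs" "fst (snd (theta_id C cs)) = cs"
    using theta_id_mor[OF cat] by (simp_all add: theta_id_def)
qed

section \<open>Monotone surjections \<open>[m] \<rightarrow> [n]\<close> as sorted lists\<close>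

lemma sorted_surj_nth_0:
  fixes a :: "nat list"
  assumes "sorted a" "set a = {0..n}" shows "a!0 = 0"
proof -
  obtain t where t: "t < length a" "a!t = 0" using assms(2) by (metis atLeastAtMost_iff in_set_conv_nth le0)
  then show ?thesis using sorted_nth_mono[OF assms(1), of 0 t] by simp
qed

lemma sorted_surj_last:
  fixes a :: "nat list"
  assumes "sorted a" "set a = {0..n}" "length a = Suc m" shows "a!m = n"
proof -
  obtain t where t: "t < length a" "a!t = n" using assms(2) by (metis atLeastAtMost_iff in_set_conv_nth le0 order.refl)
  moreover have "a!m \<le> n" using nth_mem[of m a] assms by auto
  ultimately show ?thesis using assms sorted_nth_mono[OF assms(1), of t m] by force
qed

lemma sorted_surj_nth_Suc_le:
  fixes a :: "nat list"
  assumes "sorted a" "set a = {0..n}" "Suc i < length a" shows "a!Suc i \<le> Suc (a!i)"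
proof (rule ccontr)
  assume c: "\<not> a!Suc i \<le> Suc (a!i)"
  have "a!Suc i \<le> n" using nth_mem[of "Suc i" a] assms by auto
  then have "Suc (a!i) \<in> set a" using assms c by auto
  then obtain t where t: "t < length a" "a!t = Suc (a!i)" by (auto simp: in_set_conv_nth)
  show False
  proof (cases "t \<le> i")
    case True
    then show ?thesis using sorted_nth_mono[OF assms(1) True] t assms(3) by simp
  next
    case False
    then show ?thesis using sorted_nth_mono[OF assms(1), of "Suc i" t] t c by simp
  qed
qed

lemma sorted_surj_jump:
  fixes a :: "nat list"
  assumes "sorted a" "set a = {0..n}" "length a = Suc m" "j < n"
  shows "\<exists>i<m. a!i = j \<and> a!Suc i = Suc j"
proof -
  define t where "t = (LEAST t. j < a!t)"
  have ex: "j < a!m" using sorted_surj_last[OF assms(1,2,3)] assms(4) by simp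
  have t1: "j < a!t" unfolding t_def by (rule LeastI[of "\<lambda>t. j < a!t", OF ex])
  have t2: "t \<le> m" unfolding t_def by (rule Least_le, rule ex)
  have "t \<noteq> 0" using t1 sorted_surj_nth_0[OF assms(1,2)] by (metis not_less_zero)
  then obtain i where i: "t = Suc i" by (cases t) auto
  have "a!i \<le> j" using not_less_Least[of i "\<lambda>t. j < a!t"] i unfolding t_def by simp
  moreover have "a!Suc i \<le> Suc (a!i)" using sorted_surj_nth_Suc_le[OF assms(1,2)] i t2 assms(3) by simp
  ultimately show ?thesis using t1 t2 i by (intro exI[of _ i]) simp
qed

lemma sorted_surj_eq_upt:
  fixes a :: "nat list"
  assumes "sorted a" "length a = Suc n" "set a = {0..n}"
  shows "a = [0..<Suc n]"
proof -
  have "card (set a) = length a" using assms(2,3) by simp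
  then have "distinct a" by (rule card_distinct)
  moreover have "set a = set [0..<Suc n]" using assms(3) by (simp only: set_upt atLeastLessThanSuc_atLeastAtMost)
  moreover have "sorted [0..<Suc n]" "distinct [0..<Suc n]" by (rule sorted_upt, rule distinct_upt)
  ultimately show ?thesis using assms(1) sorted_distinct_set_unique[of a "[0..<Suc n]"] by blast
qed

lemma strict_sorted_bounded_eq_upt:
  fixes a :: "nat list"
  assumes "sorted_wrt (<) a" "length a = Suc n" "\<forall>x\<in>set a. x \<le> n"
  shows "a = [0..<Suc n]"
proof -
  have d: "distinct a" "sorted a" using assms(1) by (auto simp: strict_sorted_iff)
  have sub: "set a \<subseteq> {0..n}" using assms(3) by (simp add: subset_iff)
  have "card (set a) = card {0..n}" using distinct_card[OF d(1)] assms(2) by simp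
  then have "set a = {0..n}" using card_subset_eq[OF finite_atLeastAtMost sub] by simp
  then show ?thesis using sorted_surj_eq_upt[OF d(2) assms(2)] by simp
qed

definition jump_index :: "nat list \<Rightarrow> nat \<Rightarrow> nat \<Rightarrow> nat" where
  "jump_index a m j = (SOME i. i < m \<and> a!i = j \<and> a!Suc i = Suc j)"

lemma jump_index:
  assumes "sorted a" "set a = {0..n}" "length a = Suc m" "j < n"
  shows jump_index_less: "jump_index a m j < m"
    and nth_jump_index: "a!(jump_index a m j) = j"
    and nth_Suc_jump_index: "a!Suc (jump_index a m j) = Suc j"
proof -
  have "jump_index a m j < m \<and> a!(jump_index a m j) = j \<and> a!Suc (jump_index a m j) = Suc j"
    unfolding jump_index_def by (rule someI_ex) (use sorted_surj_jump[OF assms] in blast)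
  then show "jump_index a m j < m" "a!(jump_index a m j) = j" "a!Suc (jump_index a m j) = Suc j" by auto
qed

lemma jump_index_unique:
  assumes "sorted a" "set a = {0..n}" "length a = Suc m" "i < m" "a!i < a!Suc i"
  shows "a!i < n" "jump_index a m (a!i) = i"
proof -
  have "a!Suc i \<le> n" using nth_mem[of "Suc i" a] assms by auto
  then show an: "a!i < n" using assms(5) by simp
  note J = jump_index[OF assms(1,2,3) an]
  have st: "a!Suc i = Suc (a!i)" using sorted_surj_nth_Suc_le[OF assms(1,2), of i] assms by simp
  show "jump_index a m (a!i) = i"
  proof (rule linorder_cases)
    assume "jump_index a m (a!i) < i"
    then have "a!Suc (jump_index a m (a!i)) \<le> a!i" using assms by (simp add: sorted_nth_mono)
    then show ?thesis using J(3) by simp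
  next
    assume "i < jump_index a m (a!i)"
    then have "a!Suc i \<le> a!(jump_index a m (a!i))" using assms J(1) by (simp add: sorted_nth_mono)
    then show ?thesis using J(2) st by simp
  qed
qed

text \<open>The largest and the smallest section \<open>j \<mapsto> max a\<^sup>-\<^sup>1(j)\<close>, \<open>j \<mapsto> min a\<^sup>-\<^sup>1(j)\<close> of a
  monotone surjection \<open>a\<close>; they bracket every index with the same value of \<open>a\<close>.\<close>
definition last_preimages :: "nat list \<Rightarrow> nat \<Rightarrow> nat \<Rightarrow> nat list" where
  "last_preimages a m n = map (\<lambda>j. if j < n then jump_index a m j else m) [0..<Suc n]"

definition first_preimages :: "nat list \<Rightarrow> nat \<Rightarrow> nat \<Rightarrow> nat list" where
  "first_preimages a m n = map (\<lambda>j. if j = 0 then 0 else Suc (jump_index a m (j - 1))) [0..<Suc n]"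

definition index_section :: "nat list \<Rightarrow> nat \<Rightarrow> nat \<Rightarrow> nat list \<Rightarrow> bool" where
  "index_section a m n b \<longleftrightarrow> length b = Suc n \<and> (\<forall>j\<le>n. b!j \<le> m \<and> a!(b!j) = j)"

lemma index_section_last_preimages:
  assumes "sorted a" "set a = {0..n}" "length a = Suc m"
  shows "index_section a m n (last_preimages a m n)"
  using jump_index[OF assms] sorted_surj_last[OF assms]
  by (auto simp: index_section_def last_preimages_def nth_append simp del: upt_Suc)
    (simp add: less_Suc_eq_le less_imp_le_nat)

lemma index_section_first_preimages:
  assumes "sorted a" "set a = {0..n}" "length a = Suc m"
  shows "index_section a m n (first_preimages a m n)"
  unfolding index_section_def
proof (rule conjI)
  show "length (first_preimages a m n) = Suc n" by (simp add: first_preimages_def)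
  show "\<forall>j\<le>n. first_preimages a m n ! j \<le> m \<and> a!(first_preimages a m n ! j) = j"
  proof (intro allI impI)
    fix j assume j: "j \<le> n"
    show "first_preimages a m n ! j \<le> m \<and> a!(first_preimages a m n ! j) = j"
    proof (cases "j = 0")
      case True
      then show ?thesis using sorted_surj_nth_0[OF assms(1,2)]
        unfolding first_preimages_def by (simp del: upt_Suc add: nth_upt)
    next
      case False
      then have "j - 1 < n" using j by simp
      then show ?thesis using jump_index[OF assms, of "j - 1"] j False unfolding first_preimages_def
        by (simp del: upt_Suc add: nth_upt)
    qed
  qed
qed

lemma preimages_bracket:
  assumes "sorted a" "set a = {0..n}" "length a = Suc m" "i \<le> m"
  shows "first_preimages a m n ! (a!i) \<le> i" "i \<le> last_preimages a m n ! (a!i)"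
proof -
  have an: "a!i \<le> n" using nth_mem[of i a] assms by auto
  show "first_preimages a m n ! (a!i) \<le> i"
  proof (cases "a!i = 0")
    case True then show ?thesis unfolding first_preimages_def using an by (simp del: upt_Suc add: nth_upt)
  next
    case False
    then have j1: "a!i - 1 < n" using an by simp
    note J = jump_index[OF assms(1,2,3) j1]
    have "jump_index a m (a!i - 1) < i"
    proof (rule ccontr)
      assume "\<not> jump_index a m (a!i - 1) < i"
      then have "a!i \<le> a!(jump_index a m (a!i - 1))" using assms(1,3) J(1) by (simp add: sorted_nth_mono)
      then show False using J(2) False by simp
    qed
    then show ?thesis unfolding first_preimages_def using an False by (simp del: upt_Suc add: nth_upt)
  qed
  show "i \<le> last_preimages a m n ! (a!i)"
  proof (cases "a!i < n")
    case True
    note J = jump_index[OF assms(1,2,3) True]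
    have "i < Suc (jump_index a m (a!i))"
    proof (rule ccontr)
      assume "\<not> i < Suc (jump_index a m (a!i))"
      then have "a!Suc (jump_index a m (a!i)) \<le> a!i" using assms(1,3,4) by (simp add: sorted_nth_mono)
      then show False using J(3) by simp
    qed
    then show ?thesis unfolding last_preimages_def using True by (simp del: upt_Suc add: nth_upt)
  next
    case False
    then show ?thesis unfolding last_preimages_def using an assms(4) by (simp del: upt_Suc add: nth_upt)
  qed
qed

text \<open>The \<open>i\<close>-th block of a composite of degeneracies starts with \<open>G!(a!i)!0 \<circ> F!i!0\<close>.\<close>
lemma theta_minus_comp:
  assumes MR: "is_multi_reedy C M"
    and f: "(cs, ds, a, F) \<in> theta_minus C M" and g: "(ds, es, b, G) \<in> theta_minus C M"
  shows "theta_comp C (ds, es, b, G) (cs, ds, a, F) \<in> theta_minus C M"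
proof -
  note cat = multi_reedyD(1)[OF MR] and W = wide_subcatD[OF multi_reedyD(2)[OF MR]]
  have phi: "theta_mor C (cs, ds, a, F)" and sa: "set a = {0..length ds}"
    and fm: "\<forall>i<length cs. a ! i < a ! Suc i \<longrightarrow> F ! i ! 0 \<in> Mminus M"
    using f by (auto simp: theta_minus_iff)
  have psi: "theta_mor C (ds, es, b, G)" and sb: "set b = {0..length es}"
    and gm: "\<forall>j<length ds. b ! j < b ! Suc j \<longrightarrow> G ! j ! 0 \<in> Mminus M"
    using g by (auto simp: theta_minus_iff)
  note P = theta_morD[OF phi] and Q = theta_morD[OF psi]
  have "set (map (\<lambda>x. b!x) a) = (\<lambda>x. b!x) ` {0..length ds}" using sa by simp
  also have "\<dots> = set b" using Q(3) by (auto simp: in_set_conv_nth image_iff less_Suc_eq_le) (metis atLeastAtMost_iff le0)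
  finally have surj: "set (map (\<lambda>x. b!x) a) = {0..length es}" using sb by simp
  have "map (theta_block C a F G) [0..<length cs] ! i ! 0 \<in> Mminus M"
    if i: "i < length cs" and jump: "map (\<lambda>x. b!x) a ! i < map (\<lambda>x. b!x) a ! Suc i" for i
  proof -
    have jb: "b!(a!i) < b!(a!Suc i)" using i jump P(3) by simp
    have "a!i \<le> a!Suc i" using P(3,4) i by (simp add: sorted_nth_mono)
    then have ja: "a!i < a!Suc i" using jb by (metis le_neq_implies_less less_irrefl)
    have st: "a!Suc i = Suc (a!i)" using sorted_surj_nth_Suc_le[OF P(4) sa, of i] ja P(3) i by simp
    have k0: "0 < b!(a!Suc i) - b!(a!i)" using jb by simp
    obtain j l where A: "a!i \<le> j" "j < a!Suc i" "j < length ds" "l < b!Suc j - b!j" "0 = b!j - b!(a!i) + l"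
      "theta_block C a F G i ! 0 = Cmp C (G!j!l) (F!i!(j - a!i))"
      by (rule theta_block_entry[OF phi psi i k0])
    have jj: "j = a!i" "l = 0" using A st by auto
    have f0: "F!i!0 \<in> Mminus M" "Cod C (F!i!0) = ds!(a!i)" using fm i ja P(10)[OF i, of 0] by auto
    have g0: "G!(a!i)!0 \<in> Mminus M" "Dom C (G!(a!i)!0) = ds!(a!i)"
      using gm A(3,4) jj Q(9)[of "a!i" 0] by auto
    show ?thesis using W(3)[OF f0(1) g0(1)] f0 g0 A(6) jj i by simp
  qed
  then show ?thesis
    using theta_comp_mor[OF cat phi psi] surj by (simp add: theta_comp_eq theta_minus_iff)
qed

lemma theta_plus_comp:
  assumes MR: "is_multi_reedy C M"
    and f: "(cs, ds, a, F) \<in> theta_plus C M" and g: "(ds, es, b, G) \<in> theta_plus C M"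
  shows "theta_comp C (ds, es, b, G) (cs, ds, a, F) \<in> theta_plus C M"
proof -
  note cat = multi_reedyD(1)[OF MR] and W = wide_submulticatD[OF multi_reedyD(3)[OF MR]]
  have phi: "theta_mor C (cs, ds, a, F)" and sa: "sorted_wrt (<) a"
    and fm: "\<forall>i<length cs. (cs ! i, F ! i) \<in> Mplus M"
    using f by (auto simp: theta_plus_iff)
  have psi: "theta_mor C (ds, es, b, G)" and sb: "sorted_wrt (<) b"
    and gm: "\<forall>j<length ds. (ds ! j, G ! j) \<in> Mplus M"
    using g by (auto simp: theta_plus_iff)
  note P = theta_morD[OF phi] and Q = theta_morD[OF psi]
  have strict: "sorted_wrt (<) (map (\<lambda>x. b!x) a)"
    unfolding sorted_wrt_iff_nth_less
  proof (intro allI impI)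
    fix i j assume ij: "i < j" "j < length (map (\<lambda>x. b!x) a)"
    then have "a!i < a!j" "a!j \<le> length ds" using sa P(3,5) by (auto simp: sorted_wrt_iff_nth_less)
    then show "map (\<lambda>x. b!x) a ! i < map (\<lambda>x. b!x) a ! j" using ij sb Q(3)
      by (simp add: sorted_wrt_iff_nth_less)
  qed
  have "(cs!i, theta_block C a F G i) \<in> Mplus M" if i: "i < length cs" for i
  proof -
    have ai: "a!i \<le> a!Suc i" "a!Suc i \<le> length ds" using P(3,4,5) i by (auto simp: sorted_nth_mono)
    let ?gss = "take (a!Suc i - a!i) (drop (a!i) G)"
    have "length ?gss = length (F!i)" using ai P(7)[OF i] Q(6) by simp
    moreover have "\<forall>t<length (F!i). (Cod C (F!i!t), ?gss!t) \<in> Mplus M"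
      using P(7,10)[OF i] gm ai Q(6) by (auto simp: add.commute)
    ultimately show ?thesis using W(3)[OF fm[rule_format, OF i]] by (simp add: theta_block_def)
  qed
  then show ?thesis
    using theta_comp_mor[OF cat phi psi] strict by (simp add: theta_comp_eq theta_plus_iff)
qed

lemma wide_subcat_theta_minus:
  assumes MR: "is_multi_reedy C M"
  shows "wide_subcat (ThetaCat C) (theta_minus C M)"
  unfolding wide_subcat_def ThetaCat_simps
proof (intro conjI ballI impI)
  note cat = multi_reedyD(1)[OF MR] and W = wide_subcatD[OF multi_reedyD(2)[OF MR]]
  show "theta_minus C M \<subseteq> {phi. theta_mor C phi}" by (auto simp: theta_minus_def)
  fix cs assume "cs \<in> {cs. set cs \<subseteq> Ob C}"
  then have cs: "set cs \<subseteq> Ob C" by simp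
  have "\<forall>i<length cs. Idn C (cs!i) \<in> Mminus M" using cs W(2) nth_mem by (metis subset_code(1))
  then show "theta_id C cs \<in> theta_minus C M"
    using theta_id_mor[OF cat cs]
    by (simp add: theta_id_def theta_minus_iff atLeast0AtMost atLeast0LessThan lessThan_Suc_atMost del: upt_Suc)
next
  fix f g assume f: "f \<in> theta_minus C M" and g: "g \<in> theta_minus C M" and fg: "fst (snd f) = fst g"
  obtain cs ds a F where fe: "f = (cs, ds, a, F)" by (cases f) auto
  obtain es b G where ge: "g = (ds, es, b, G)" using fg fe by (cases g) auto
  show "theta_comp C g f \<in> theta_minus C M" using theta_minus_comp[OF MR] f g fe ge by simp
qed

lemma wide_subcat_theta_plus:
  assumes MR: "is_multi_reedy C M"
  shows "wide_subcat (ThetaCat C) (theta_plus C M)"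
  unfolding wide_subcat_def ThetaCat_simps
proof (intro conjI ballI impI)
  note cat = multi_reedyD(1)[OF MR] and W = wide_submulticatD[OF multi_reedyD(3)[OF MR]]
  show "theta_plus C M \<subseteq> {phi. theta_mor C phi}" by (auto simp: theta_plus_def)
  fix cs assume "cs \<in> {cs. set cs \<subseteq> Ob C}"
  then have cs: "set cs \<subseteq> Ob C" by simp
  have "\<forall>i<length cs. (cs!i, [Idn C (cs!i)]) \<in> Mplus M" using cs W(2) nth_mem by (metis subset_code(1))
  then show "theta_id C cs \<in> theta_plus C M"
    using theta_id_mor[OF cat cs] sorted_wrt_upt[of 0 "Suc (length cs)"]
    by (simp add: theta_id_def theta_plus_iff del: upt_Suc)
next
  fix f g assume f: "f \<in> theta_plus C M" and g: "g \<in> theta_plus C M" and fg: "fst (snd f) = fst g"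
  obtain cs ds a F where fe: "f = (cs, ds, a, F)" by (cases f) auto
  obtain es b G where ge: "g = (ds, es, b, G)" using fg fe by (cases g) auto
  show "theta_comp C g f \<in> theta_plus C M" using theta_plus_comp[OF MR] f g fe ge by simp
qed

section \<open>Degrees along \<open>(\<Theta>C)\<^sup>+\<close> and \<open>(\<Theta>C)\<^sup>-\<close>\<close>

lemma sum_list_map_eq_sum_nth: "sum_list (map f xs) = (\<Sum>i<length xs. f (xs!i))"
  by (simp add: sum_list_sum_nth atLeast0LessThan)

lemma sum_blocks_telescope:
  fixes a :: "nat list" and g :: "nat \<Rightarrow> nat"
  assumes "sorted a" "m < length a"
  shows "(\<Sum>i<m. \<Sum>j=a!i..<a!Suc i. g j) = (\<Sum>j=a!0..<a!m. g j)"
  using assms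
proof (induction m)
  case 0 then show ?case by simp
next
  case (Suc m)
  have "a!0 \<le> a!m" "a!m \<le> a!Suc m" using Suc.prems by (auto simp: sorted_nth_mono)
  then show ?case using Suc by (simp add: sum.atLeastLessThan_concat)
qed

lemma sum_lessThan_shift:
  fixes g :: "nat \<Rightarrow> nat"
  assumes "p \<le> q"
  shows "(\<Sum>k<q-p. g (p+k)) = (\<Sum>j=p..<q. g j)"
proof -
  have "(\<Sum>j=p..<q. g j) = sum g {0+p..<(q-p)+p}" using assms by simp
  also have "\<dots> = (\<Sum>k=0..<q-p. g (k+p))" by (rule sum.shift_bounds_nat_ivl)
  finally show ?thesis by (simp add: atLeast0LessThan add.commute)
qed

lemma theta_mor_upt_block:
  assumes "theta_mor C (cs, ds, [0..<Suc (length cs)], F)" "i < length cs"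
  shows "F!i = [F!i!0]" "F!i!0 \<in> Mor C" "Dom C (F!i!0) = cs!i" "Cod C (F!i!0) = ds!i"
proof -
  note P = theta_morD[OF assms(1)]
  have l: "length (F!i) = 1" using P(7)[OF assms(2)] assms(2) by (simp del: upt_Suc)
  then show "F!i = [F!i!0]" by (cases "F!i") auto
  have "0 < [0..<Suc (length cs)] ! Suc i - [0..<Suc (length cs)] ! i" using assms(2) by (simp del: upt_Suc)
  then show "F!i!0 \<in> Mor C" "Dom C (F!i!0) = cs!i" "Cod C (F!i!0) = ds!i"
    using P(8,9,10)[OF assms(2)] assms(2) by (simp_all del: upt_Suc)
qed

lemma theta_mor_upt_eq_theta_id:
  assumes cat: "is_cat C" and phi: "theta_mor C (cs, ds, [0..<Suc (length cs)], F)"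
    and len: "length ds = length cs" and idn: "\<forall>i<length cs. F!i!0 = Idn C (cs!i)"
  shows "(cs, ds, [0..<Suc (length cs)], F) = theta_id C cs"
proof -
  note P = theta_morD[OF phi] and B = theta_mor_upt_block[OF phi]
  have "ds!i = cs!i" if "i < length cs" for i
    using B(4)[OF that] idn that P(1) is_catD(5)[OF cat] by (simp add: subset_iff)
  then have ds: "ds = cs" using len by (intro nth_equalityI) auto
  have "F!i = [Idn C (cs!i)]" if "i < length cs" for i using B(1)[OF that] idn that by metis
  then have "F = map (\<lambda>c. [Idn C c]) cs" using P(6) by (intro nth_equalityI) auto
  with ds show ?thesis by (simp add: theta_id_def)
qed

lemma theta_plus_block_deg:
  assumes MR: "is_multi_reedy C M" and f: "(cs, ds, a, F) \<in> theta_plus C M" and i: "i < length cs"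
  shows "Mdeg M (cs!i) \<le> (\<Sum>j=a!i..<a!Suc i. Mdeg M (ds!j))"
proof -
  have phi: "theta_mor C (cs, ds, a, F)" and fm: "(cs ! i, F ! i) \<in> Mplus M"
    using f i by (auto simp: theta_plus_iff)
  note P = theta_morD[OF phi]
  have "Mdeg M (cs!i) \<le> sum_list (map (\<lambda>d. Mdeg M (Cod C d)) (F!i))"
    by (rule multi_reedy_Mplus_deg[OF MR fm])
  also have "\<dots> = (\<Sum>k<a!Suc i - a!i. Mdeg M (ds!(a!i + k)))"
    unfolding sum_list_map_eq_sum_nth using P(7,10)[OF i] by simp
  also have "\<dots> = (\<Sum>j=a!i..<a!Suc i. Mdeg M (ds!j))"
    using P(3,4) i by (intro sum_lessThan_shift) (simp add: sorted_nth_mono)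
  finally show ?thesis .
qed

lemma theta_plus_length_le:
  assumes "(cs, ds, a, F) \<in> theta_plus C M"
  shows "length cs \<le> length ds"
proof -
  have phi: "theta_mor C (cs, ds, a, F)" and "sorted_wrt (<) a" using assms by (auto simp: theta_plus_iff)
  then have "distinct a" by (simp add: strict_sorted_iff)
  moreover have "set a \<subseteq> {0..length ds}" using theta_morD(3,5)[OF phi] by (auto simp: in_set_conv_nth)
  then have "card (set a) \<le> card {0..length ds}" by (rule card_mono[OF finite_atLeastAtMost])
  ultimately show ?thesis using distinct_card theta_morD(3)[OF phi] by fastforce
qed

lemma theta_plus_sum_deg_le:
  assumes MR: "is_multi_reedy C M" and f: "(cs, ds, a, F) \<in> theta_plus C M"
  shows "sum_list (map (Mdeg M) cs) \<le> sum_list (map (Mdeg M) ds)"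
proof -
  have phi: "theta_mor C (cs, ds, a, F)" using f by (simp add: theta_plus_iff)
  note P = theta_morD[OF phi]
  have "sum_list (map (Mdeg M) cs) = (\<Sum>i<length cs. Mdeg M (cs!i))" by (rule sum_list_map_eq_sum_nth)
  also have "\<dots> \<le> (\<Sum>i<length cs. \<Sum>j=a!i..<a!Suc i. Mdeg M (ds!j))"
    using theta_plus_block_deg[OF MR f] by (intro sum_mono) simp
  also have "\<dots> = (\<Sum>j=a!0..<a!length cs. Mdeg M (ds!j))" using sum_blocks_telescope[OF P(4)] P(3) by simp
  also have "\<dots> \<le> (\<Sum>j<length ds. Mdeg M (ds!j))" using P(5)[of "length cs"] by (intro sum_mono2) auto
  also have "\<dots> = sum_list (map (Mdeg M) ds)" by (rule sum_list_map_eq_sum_nth[symmetric])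
  finally show ?thesis .
qed

lemma theta_plus_deg:
  assumes MR: "is_multi_reedy C M" and f: "(cs, ds, a, F) \<in> theta_plus C M"
  shows "theta_deg M cs \<le> theta_deg M ds"
    and "theta_deg M cs = theta_deg M ds \<Longrightarrow> (cs, ds, a, F) = theta_id C cs"
proof -
  have phi: "theta_mor C (cs, ds, a, F)" and sa: "sorted_wrt (<) a"
    and fm: "\<forall>i<length cs. (cs ! i, F ! i) \<in> Mplus M"
    using f by (auto simp: theta_plus_iff)
  note P = theta_morD[OF phi] and mn = theta_plus_length_le[OF f] and s = theta_plus_sum_deg_le[OF MR f]
  show "theta_deg M cs \<le> theta_deg M ds" unfolding theta_deg_def using mn s by simp
  assume "theta_deg M cs = theta_deg M ds"
  then have len: "length ds = length cs" and seq: "sum_list (map (Mdeg M) cs) = sum_list (map (Mdeg M) ds)"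
    using mn s unfolding theta_deg_def by auto
  have "\<forall>x\<in>set a. x \<le> length cs"
  proof
    fix x assume "x \<in> set a"
    then obtain t where "t < length a" "x = a!t" by (auto simp: in_set_conv_nth)
    then show "x \<le> length cs" using P(3) P(5)[of t] len by simp
  qed
  then have aid: "a = [0..<Suc (length cs)]" using strict_sorted_bounded_eq_upt[OF sa P(3)] by blast
  note B = theta_mor_upt_block[OF phi[unfolded aid]]
  have le: "Mdeg M (cs!i) \<le> Mdeg M (ds!i)" if "i \<in> {..<length cs}" for i
    using theta_plus_block_deg[OF MR f, of i] that aid by (simp del: upt_Suc)
  have "(\<Sum>i<length cs. Mdeg M (cs!i)) = (\<Sum>i<length cs. Mdeg M (ds!i))"
    using seq len unfolding sum_list_map_eq_sum_nth by simp
  from sum_mono_inv[OF this le]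
  have pe: "Mdeg M (cs!i) = Mdeg M (ds!i)" if "i < length cs" for i using that by simp
  have "F!i!0 = Idn C (cs!i)" if i: "i < length cs" for i
  proof -
    have "(cs!i, F!i) \<in> Mplus M" using fm i by simp
    then have "(Dom C (F!i!0), [F!i!0]) \<in> Mplus M" unfolding B(3)[OF i] by (subst (asm) B(1)[OF i])
    then have "F!i!0 = Idn C (Dom C (F!i!0))"
      by (rule multi_reedy_Mplus_deg_eq[OF MR]) (simp add: pe[OF i] B(3,4)[OF i])
    from this[unfolded B(3)[OF i]] show ?thesis .
  qed
  then show "(cs, ds, a, F) = theta_id C cs"
    using theta_mor_upt_eq_theta_id[OF multi_reedyD(1)[OF MR] phi[unfolded aid] len] aid by simp
qed

lemma theta_minus_jump_deg:
  assumes MR: "is_multi_reedy C M" and f: "(cs, ds, a, F) \<in> theta_minus C M"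
    and i: "i < length cs" and jump: "a!i < a!Suc i"
  shows "Mdeg M (ds!(a!i)) \<le> Mdeg M (cs!i)"
proof -
  have phi: "theta_mor C (cs, ds, a, F)" and "F!i!0 \<in> Mminus M"
    using f i jump by (auto simp: theta_minus_iff)
  moreover have "0 < a!Suc i - a!i" using jump by simp
  ultimately show ?thesis using multi_reedy_Mminus_deg(1)[OF MR] theta_morD(9,10)[OF phi i] by fastforce
qed

text \<open>The jumps of \<open>a\<close> are in bijection with \<open>[0..<length ds]\<close>; each jump \<open>i\<close> contributes
  \<open>Mdeg (ds!(a!i)) \<le> Mdeg (cs!i)\<close>.\<close>
lemma theta_minus_sum_deg_le:
  assumes MR: "is_multi_reedy C M" and f: "(cs, ds, a, F) \<in> theta_minus C M"
  shows "sum_list (map (Mdeg M) ds) \<le> sum_list (map (Mdeg M) cs)"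
proof -
  have phi: "theta_mor C (cs, ds, a, F)" and sa: "set a = {0..length ds}"
    using f by (auto simp: theta_minus_iff)
  note P = theta_morD[OF phi]
  define J where "J = {i. i < length cs \<and> a!i < a!Suc i}"
  have "inj_on (\<lambda>i. a!i) J"
  proof (rule inj_onI)
    have "a!i < a!i'" if "i \<in> J" "i' \<in> J" "i < i'" for i i'
    proof -
      have "a!i < a!Suc i" "a!Suc i \<le> a!i'" using that P(3,4) unfolding J_def by (auto simp: sorted_nth_mono)
      then show ?thesis by simp
    qed
    then show "i = i'" if "i \<in> J" "i' \<in> J" "a!i = a!i'" for i i'
      using that by (metis less_irrefl nat_neq_iff)
  qed
  moreover have "(\<lambda>i. a!i) ` J = {..<length ds}"
  proof
    show "(\<lambda>i. a!i) ` J \<subseteq> {..<length ds}"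
    proof
      fix x assume "x \<in> (\<lambda>i. a!i) ` J"
      then obtain i where "i \<in> J" "x = a!i" by blast
      then show "x \<in> {..<length ds}" using P(5)[of "Suc i"] unfolding J_def by auto
    qed
    show "{..<length ds} \<subseteq> (\<lambda>i. a!i) ` J"
    proof
      fix j assume "j \<in> {..<length ds}"
      then obtain i where "i < length cs" "a!i = j" "a!Suc i = Suc j"
        using sorted_surj_jump[OF P(4) sa P(3)] by blast
      then show "j \<in> (\<lambda>i. a!i) ` J" unfolding J_def by force
    qed
  qed
  ultimately have bij: "bij_betw (\<lambda>i. a!i) J {..<length ds}" by (simp add: bij_betw_def)
  have "sum_list (map (Mdeg M) ds) = (\<Sum>j<length ds. Mdeg M (ds!j))" by (rule sum_list_map_eq_sum_nth)
  also have "\<dots> = (\<Sum>i\<in>J. Mdeg M (ds!(a!i)))" by (rule sum.reindex_bij_betw[OF bij, symmetric])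
  also have "\<dots> \<le> (\<Sum>i\<in>J. Mdeg M (cs!i))"
    using theta_minus_jump_deg[OF MR f] unfolding J_def by (intro sum_mono) simp
  also have "\<dots> \<le> (\<Sum>i<length cs. Mdeg M (cs!i))" unfolding J_def by (intro sum_mono2) auto
  also have "\<dots> = sum_list (map (Mdeg M) cs)" by (rule sum_list_map_eq_sum_nth[symmetric])
  finally show ?thesis .
qed

lemma theta_minus_deg:
  assumes MR: "is_multi_reedy C M" and f: "(cs, ds, a, F) \<in> theta_minus C M"
  shows "theta_deg M ds \<le> theta_deg M cs"
    and "theta_deg M ds = theta_deg M cs \<Longrightarrow> (cs, ds, a, F) = theta_id C cs"
proof -
  have phi: "theta_mor C (cs, ds, a, F)" and sa: "set a = {0..length ds}"
    and fm: "\<forall>i<length cs. a ! i < a ! Suc i \<longrightarrow> F ! i ! 0 \<in> Mminus M"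
    using f by (auto simp: theta_minus_iff)
  note P = theta_morD[OF phi] and s = theta_minus_sum_deg_le[OF MR f]
  have nm: "length ds \<le> length cs" using card_length[of a] sa P(3) by simp
  show "theta_deg M ds \<le> theta_deg M cs" unfolding theta_deg_def using nm s by simp
  assume "theta_deg M ds = theta_deg M cs"
  then have len: "length ds = length cs" and seq: "sum_list (map (Mdeg M) ds) = sum_list (map (Mdeg M) cs)"
    using nm s unfolding theta_deg_def by auto
  have aid: "a = [0..<Suc (length cs)]" using sorted_surj_eq_upt[OF P(4)] P(3) sa len by simp
  note B = theta_mor_upt_block[OF phi[unfolded aid]]
  have jump: "a!i < a!Suc i" if "i < length cs" for i using that aid by (simp del: upt_Suc)
  have le: "Mdeg M (ds!i) \<le> Mdeg M (cs!i)" if "i \<in> {..<length cs}" for i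
    using theta_minus_jump_deg[OF MR f _ jump, of i] that aid by (simp del: upt_Suc)
  have "(\<Sum>i<length cs. Mdeg M (ds!i)) = (\<Sum>i<length cs. Mdeg M (cs!i))"
    using seq len unfolding sum_list_map_eq_sum_nth by simp
  from sum_mono_inv[OF this le]
  have pe: "Mdeg M (ds!i) = Mdeg M (cs!i)" if "i < length cs" for i using that by simp
  have "F!i!0 = Idn C (cs!i)" if i: "i < length cs" for i
  proof -
    have "F!i!0 \<in> Mminus M" using fm jump[OF i] i by simp
    then have "F!i!0 = Idn C (Dom C (F!i!0))"
      by (rule multi_reedy_Mminus_deg(2)[OF MR]) (simp add: pe[OF i] B(3,4)[OF i])
    from this[unfolded B(3)[OF i]] show ?thesis .
  qed
  then show "(cs, ds, a, F) = theta_id C cs"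
    using theta_mor_upt_eq_theta_id[OF multi_reedyD(1)[OF MR] phi[unfolded aid] len] aid by simp
qed

section \<open>Factorization in \<open>\<Theta>C\<close>\<close>

text \<open>The epi-mono factorization in \<open>\<Delta>\<close>: \<open>a = mono_part a m \<circ> (jump_count a)\<close>, where
  \<open>jump_count a\<close> counts the strict increases of \<open>a\<close> before a given index.\<close>
definition is_jump :: "nat list \<Rightarrow> nat \<Rightarrow> bool" where
  "is_jump a i \<longleftrightarrow> a!i < a!Suc i"

definition jump_count :: "nat list \<Rightarrow> nat \<Rightarrow> nat" where
  "jump_count a i = length (filter (is_jump a) [0..<i])"

definition jump_list :: "nat list \<Rightarrow> nat \<Rightarrow> nat list" where
  "jump_list a m = filter (is_jump a) [0..<m]"

definition mono_part :: "nat list \<Rightarrow> nat \<Rightarrow> nat list" where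
  "mono_part a m = a!0 # map (\<lambda>j. a!Suc j) (jump_list a m)"

lemma jump_count_0 [simp]: "jump_count a 0 = 0"
  by (simp add: jump_count_def)

lemma jump_count_Suc: "jump_count a (Suc i) = jump_count a i + (if is_jump a i then 1 else 0)"
  by (simp add: jump_count_def)

lemma jump_count_mono: "i \<le> i' \<Longrightarrow> jump_count a i \<le> jump_count a i'"
  by (induction i' rule: dec_induct) (auto simp: jump_count_Suc)

lemma length_jump_list: "length (jump_list a m) = jump_count a m"
  by (simp add: jump_count_def jump_list_def)

lemma jump_list_nth_jump_count:
  assumes "i < m" "is_jump a i" shows "jump_list a m ! jump_count a i = i"
proof -
  have "[0..<m] = [0..<i] @ i # [Suc i..<m]" using assms(1) by (metis upt_add_eq_append upt_conv_Cons le0 le_add_diff_inverse less_imp_le_nat)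
  then have "jump_list a m = filter (is_jump a) [0..<i] @ i # filter (is_jump a) [Suc i..<m]"
    using assms(2) by (simp add: jump_list_def)
  then show ?thesis by (simp add: jump_count_def nth_append)
qed

lemma jump_count_less_length:
  assumes "i < m" "is_jump a i" shows "jump_count a i < length (jump_list a m)"
proof -
  have "jump_count a i < jump_count a (Suc i)" using assms(2) by (simp add: jump_count_Suc)
  also have "\<dots> \<le> jump_count a m" using assms(1) by (intro jump_count_mono) simp
  finally show ?thesis by (simp add: length_jump_list)
qed

lemma jump_list_nth:
  assumes "l < length (jump_list a m)"
  shows "jump_list a m ! l < m" "is_jump a (jump_list a m ! l)" "jump_count a (jump_list a m ! l) = l"
proof -
  have "jump_list a m ! l \<in> set (jump_list a m)" using assms by simp
  then show 1: "jump_list a m ! l < m" and 2: "is_jump a (jump_list a m ! l)" by (auto simp: jump_list_def)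
  have "distinct (jump_list a m)" by (simp add: jump_list_def)
  moreover have "jump_list a m ! jump_count a (jump_list a m ! l) = jump_list a m ! l"
    using jump_list_nth_jump_count[OF 1 2] .
  ultimately show "jump_count a (jump_list a m ! l) = l"
    using jump_count_less_length[OF 1 2] assms nth_eq_iff_index_eq by blast
qed

lemma mono_part_nth_jump_count:
  assumes "sorted a" "length a = Suc m" "i \<le> m"
  shows "mono_part a m ! jump_count a i = a!i"
  using assms(3)
proof (induction i)
  case 0 then show ?case by (simp add: mono_part_def)
next
  case (Suc i)
  show ?case
  proof (cases "is_jump a i")
    case True
    have i: "i < m" using Suc by simp
    have "mono_part a m ! jump_count a (Suc i) = a!Suc (jump_list a m ! jump_count a i)"
      using True jump_count_less_length[OF i True] by (simp add: jump_count_Suc mono_part_def)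
    also have "\<dots> = a!Suc i" using jump_list_nth_jump_count[OF i True] by simp
    finally show ?thesis .
  next
    case False
    have "a!i \<le> a!Suc i" using assms Suc.prems by (simp add: sorted_nth_mono)
    then have "a!Suc i = a!i" using False by (simp add: is_jump_def)
    then show ?thesis using Suc False by (simp add: jump_count_Suc)
  qed
qed

lemma mono_part_nth:
  assumes "sorted a" "length a = Suc m" "l < length (jump_list a m)"
  shows "mono_part a m ! l = a!(jump_list a m ! l)" "mono_part a m ! Suc l = a!Suc (jump_list a m ! l)"
  using mono_part_nth_jump_count[OF assms(1,2), of "jump_list a m ! l"] jump_list_nth[OF assms(3)] assms(3)
  by (simp_all add: mono_part_def)

text \<open>Given componentwise factorizations \<open>F!i = GS i \<circ> S i\<close> in \<open>C\<close>, the degeneracy keeps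
  \<open>S i\<close> exactly at the jumps of \<open>a\<close>, and the face carries the \<open>GS i\<close> of those jumps.\<close>
definition theta_minus_factor :: "('o,'m) cat \<Rightarrow> 'o list \<Rightarrow> nat list \<Rightarrow> (nat \<Rightarrow> 'm) \<Rightarrow> ('o,'m) tmor" where
  "theta_minus_factor C cs a S =
     (cs, map (\<lambda>j. Cod C (S j)) (jump_list a (length cs)), map (jump_count a) [0..<Suc (length cs)],
      map (\<lambda>i. if is_jump a i then [S i] else []) [0..<length cs])"

definition theta_plus_factor ::
    "('o,'m) cat \<Rightarrow> 'o list \<Rightarrow> 'o list \<Rightarrow> nat list \<Rightarrow> (nat \<Rightarrow> 'm) \<Rightarrow> (nat \<Rightarrow> 'm list) \<Rightarrow> ('o,'m) tmor" where
  "theta_plus_factor C cs ds a S GS =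
     (map (\<lambda>j. Cod C (S j)) (jump_list a (length cs)), ds, mono_part a (length cs), map GS (jump_list a (length cs)))"

context
  fixes C :: "('o,'m) cat" and M :: "('o,'m) mreedy_str" and cs ds a F S GS
  assumes MR: "is_multi_reedy C M" and phi: "theta_mor C (cs, ds, a, F)"
    and SG: "\<And>i. i < length cs \<Longrightarrow> S i \<in> Mminus M \<and> Dom C (S i) = cs!i \<and> (Cod C (S i), GS i) \<in> Mplus M \<and>
               F!i = map (\<lambda>g. Cmp C g (S i)) (GS i)"
begin

lemma componentwise_factorization:
  assumes i: "i < length cs"
  shows "S i \<in> Mminus M" "S i \<in> Mor C" "Dom C (S i) = cs!i" "(Cod C (S i), GS i) \<in> Mplus M"
    "F!i = map (\<lambda>g. Cmp C g (S i)) (GS i)" "length (GS i) = a!Suc i - a!i"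
    "\<And>t. t < length (GS i) \<Longrightarrow> GS i ! t \<in> Mor C \<and> Dom C (GS i ! t) = Cod C (S i) \<and> Cod C (GS i ! t) = ds!(a!i + t)"
proof -
  note P = theta_morD[OF phi]
  show S: "S i \<in> Mminus M" "Dom C (S i) = cs!i" "(Cod C (S i), GS i) \<in> Mplus M"
    "F!i = map (\<lambda>g. Cmp C g (S i)) (GS i)" using SG[OF i] by blast+
  show Smor: "S i \<in> Mor C" using S(1) wide_subcatD(1)[OF multi_reedyD(2)[OF MR]] by blast
  show len: "length (GS i) = a!Suc i - a!i" using S(4) P(7)[OF i] by (metis length_map)
  fix t assume t: "t < length (GS i)"
  have g: "GS i ! t \<in> Mor C" "Dom C (GS i ! t) = Cod C (S i)"
    using wide_submulticatD(1)[OF multi_reedyD(3)[OF MR] S(3)] t unfolding is_multimor_def by auto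
  have "F!i!t = Cmp C (GS i ! t) (S i)" using S(4) t by simp
  then have "Cod C (F!i!t) = Cod C (GS i ! t)" using is_catD(8)[OF multi_reedyD(1)[OF MR]] Smor g by simp
  then show "GS i ! t \<in> Mor C \<and> Dom C (GS i ! t) = Cod C (S i) \<and> Cod C (GS i ! t) = ds!(a!i + t)"
    using g P(10)[OF i] t len by simp
qed

lemma theta_minus_factor_mem: "theta_minus_factor C cs a S \<in> theta_minus C M"
proof -
  note P = theta_morD[OF phi] and S = componentwise_factorization
  let ?m = "length cs"
  define es where "es = map (\<lambda>j. Cod C (S j)) (jump_list a ?m)"
  define am where "am = map (jump_count a) [0..<Suc ?m]"
  define Fq where "Fq = map (\<lambda>i. if is_jump a i then [S i] else []) [0..<?m]"
  have amn: "\<And>i. i \<le> ?m \<Longrightarrow> am!i = jump_count a i" unfolding am_def by (simp del: upt_Suc add: nth_upt)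
  have amS: "\<And>i. i < ?m \<Longrightarrow> am!Suc i = am!i + (if is_jump a i then 1 else 0)"
    using amn by (simp add: jump_count_Suc)
  have les: "length es = jump_count a ?m" unfolding es_def by (simp add: length_jump_list)
  have Fqn: "\<And>i. i < ?m \<Longrightarrow> Fq!i = (if is_jump a i then [S i] else [])" unfolding Fq_def by simp
  have esn: "\<And>i. i < ?m \<Longrightarrow> is_jump a i \<Longrightarrow> es!(am!i) = Cod C (S i)"
    using amn jump_list_nth_jump_count jump_count_less_length unfolding es_def by simp
  have qmor: "theta_mor C (cs, es, am, Fq)"
    unfolding theta_mor_iff
  proof (intro conjI allI impI)
    show "set cs \<subseteq> Ob C" by (rule P(1))
    show "set es \<subseteq> Ob C" unfolding es_def
      using jump_list_nth(1) S(2) is_catD(2)[OF multi_reedyD(1)[OF MR]] by (auto simp: in_set_conv_nth)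
    show "length am = Suc ?m" unfolding am_def by simp
    show "sorted am" unfolding sorted_iff_nth_mono
      using amn jump_count_mono by (simp add: am_def del: upt_Suc)
    show "\<forall>x\<in>set am. x \<le> length es"
      using jump_count_mono[of _ ?m a] by (auto simp: am_def les)
    show "length Fq = ?m" unfolding Fq_def by simp
    fix i assume i: "i < ?m"
    show "length (Fq!i) = am!Suc i - am!i" using Fqn[OF i] amS[OF i] by simp
    fix t assume t: "t < length (Fq!i)"
    then have jt: "is_jump a i" "t = 0" using Fqn[OF i] by (auto split: if_splits)
    show "Fq!i!t \<in> Mor C" "Dom C (Fq!i!t) = cs!i" "Cod C (Fq!i!t) = es!(am!i + t)"
      using Fqn[OF i] jt S(2,3)[OF i] esn[OF i] by simp_all
  qed
  have "{0..length es} \<subseteq> set am"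
  proof
    fix l assume "l \<in> {0..length es}"
    then have l: "l \<le> jump_count a ?m" using les by simp
    show "l \<in> set am"
    proof (cases "l = jump_count a ?m")
      case True
      have "?m < length am" by (simp add: am_def)
      then show ?thesis using True amn[of ?m] nth_mem by fastforce
    next
      case False
      then have "l < length (jump_list a ?m)" using l by (simp add: length_jump_list)
      then have j: "jump_list a ?m ! l < ?m" "jump_count a (jump_list a ?m ! l) = l"
        using jump_list_nth by blast+
      then have "am!(jump_list a ?m ! l) = l" "jump_list a ?m ! l < length am"
        using amn[of "jump_list a ?m ! l"] by (simp_all add: am_def)
      then show ?thesis using nth_mem by fastforce
    qed
  qed
  then have "set am = {0..length es}" using qmor by (auto simp: theta_mor_iff)
  moreover have "Fq!i!0 \<in> Mminus M" if i: "i < ?m" and "am!i < am!Suc i" for i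
  proof -
    have "is_jump a i" using that amS[OF i] by (auto split: if_splits)
    then show ?thesis using Fqn[OF i] S(1)[OF i] by simp
  qed
  ultimately have "(cs, es, am, Fq) \<in> theta_minus C M" using qmor by (simp add: theta_minus_iff)
  then show ?thesis unfolding theta_minus_factor_def es_def am_def Fq_def .
qed

lemma theta_plus_factor_mem: "theta_plus_factor C cs ds a S GS \<in> theta_plus C M"
proof -
  note P = theta_morD[OF phi] and S = componentwise_factorization
  let ?m = "length cs" and ?js = "jump_list a (length cs)"
  define es where "es = map (\<lambda>j. Cod C (S j)) ?js"
  define ap where "ap = mono_part a ?m"
  define Gp where "Gp = map GS ?js"
  have apn: "\<And>l. l < length ?js \<Longrightarrow> ap!l = a!(?js!l) \<and> ap!Suc l = a!Suc (?js!l)"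
    using mono_part_nth[OF P(4) P(3)] unfolding ap_def by blast
  have lap: "length ap = Suc (length es)" unfolding ap_def mono_part_def es_def by simp
  have sap: "sorted_wrt (<) ap"
    unfolding sorted_wrt_iff_nth_Suc_transp[OF transp_on_less]
  proof (intro allI impI)
    fix l assume "Suc l < length ap"
    then have lk: "l < length ?js" using lap unfolding es_def by simp
    then show "ap!l < ap!Suc l" using apn[OF lk] jump_list_nth(2)[OF lk] by (simp add: is_jump_def)
  qed
  have pmor: "theta_mor C (es, ds, ap, Gp)"
    unfolding theta_mor_iff
  proof (intro conjI allI impI)
    show "set es \<subseteq> Ob C" unfolding es_def
      using jump_list_nth(1) S(2) is_catD(2)[OF multi_reedyD(1)[OF MR]] by (auto simp: in_set_conv_nth)
    show "set ds \<subseteq> Ob C" by (rule P(2))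
    show "length ap = Suc (length es)" by (rule lap)
    show "sorted ap" using sap by (simp add: strict_sorted_iff)
    show "\<forall>x\<in>set ap. x \<le> length ds" unfolding ap_def mono_part_def
    proof (auto simp: in_set_conv_nth)
      show "a!0 \<le> length ds" using P(5) by simp
      fix l assume "l < length ?js"
      then have "Suc (?js ! l) \<le> ?m" using jump_list_nth(1) by (simp add: Suc_leI)
      then show "a!Suc (?js ! l) \<le> length ds" by (rule P(5))
    qed
    show "length Gp = length es" unfolding Gp_def es_def by simp
    fix l assume "l < length es"
    then have lk: "l < length ?js" unfolding es_def by simp
    note jl = jump_list_nth(1)[OF lk]
    show "length (Gp!l) = ap!Suc l - ap!l" using S(6)[OF jl] apn[OF lk] lk unfolding Gp_def by simp
    fix t assume "t < length (Gp!l)"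
    then have t: "t < length (GS (?js!l))" using lk unfolding Gp_def by simp
    show "Gp!l!t \<in> Mor C" "Dom C (Gp!l!t) = es!l" "Cod C (Gp!l!t) = ds!(ap!l + t)"
      using S(7)[OF jl t] lk apn[OF lk] unfolding Gp_def es_def by simp_all
  qed
  have "(es!l, Gp!l) \<in> Mplus M" if "l < length es" for l
    using S(4)[OF jump_list_nth(1)] that unfolding es_def Gp_def by simp
  then have "(es, ds, ap, Gp) \<in> theta_plus C M" using pmor sap by (simp add: theta_plus_iff)
  then show ?thesis unfolding theta_plus_factor_def es_def ap_def Gp_def .
qed

lemma theta_comp_factors:
  "theta_comp C (theta_plus_factor C cs ds a S GS) (theta_minus_factor C cs a S) = (cs, ds, a, F)"
proof -
  note P = theta_morD[OF phi] and S = componentwise_factorization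
  let ?m = "length cs" and ?js = "jump_list a (length cs)"
  define am where "am = map (jump_count a) [0..<Suc ?m]"
  define Fq where "Fq = map (\<lambda>i. if is_jump a i then [S i] else []) [0..<?m]"
  define Gp where "Gp = map GS ?js"
  have amn: "\<And>i. i \<le> ?m \<Longrightarrow> am!i = jump_count a i" unfolding am_def by (simp del: upt_Suc add: nth_upt)
  have "map (\<lambda>x. mono_part a ?m ! x) am = a"
  proof (rule nth_equalityI)
    fix i assume "i < length (map (\<lambda>x. mono_part a ?m ! x) am)"
    then have i: "i \<le> ?m" by (simp add: am_def)
    then show "map (\<lambda>x. mono_part a ?m ! x) am ! i = a!i"
      using amn[OF i] mono_part_nth_jump_count[OF P(4) P(3) i] by (simp add: am_def del: upt_Suc)
  qed (simp add: am_def P(3))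
  moreover have "map (theta_block C am Fq Gp) [0..<?m] = F"
  proof (rule nth_equalityI)
    fix i assume "i < length (map (theta_block C am Fq Gp) [0..<?m])"
    then have i: "i < ?m" by simp
    show "map (theta_block C am Fq Gp) [0..<?m] ! i = F!i"
    proof (cases "is_jump a i")
      case True
      have c: "jump_count a i < length ?js" using jump_count_less_length[OF i True] .
      have "take (am!Suc i - am!i) (drop (am!i) Gp) = [Gp!(am!i)]"
        using amn[of i] amn[of "Suc i"] True i c unfolding Gp_def
        by (simp add: jump_count_Suc flip: Cons_nth_drop_Suc)
      moreover have "Gp!(am!i) = GS i"
        using amn[of i] i c jump_list_nth_jump_count[OF i True] unfolding Gp_def by simp
      ultimately show ?thesis using i True S(5)[OF i] unfolding Fq_def by (simp add: theta_block_def)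
    next
      case False
      have "a!i \<le> a!Suc i" using P(3,4) i by (simp add: sorted_nth_mono)
      then have "F!i = []" using P(7)[OF i] False by (simp add: is_jump_def)
      then show ?thesis using i False unfolding Fq_def by (simp add: theta_block_def)
    qed
  qed (use P(6) in simp)
  ultimately show ?thesis
    unfolding theta_plus_factor_def theta_minus_factor_def theta_comp_eq am_def[symmetric] Fq_def[symmetric]
      Gp_def[symmetric] by simp
qed

end

lemma theta_factorization_exists:
  assumes MR: "is_multi_reedy C M" and phi: "theta_mor C (cs, ds, a, F)"
  obtains p q where "q \<in> theta_minus C M" "p \<in> theta_plus C M" "fst (snd q) = fst p"
    "(cs, ds, a, F) = theta_comp C p q"
proof -
  have "\<exists>s gs. i < length cs \<longrightarrow> s \<in> Mminus M \<and> Dom C s = cs!i \<and> (Cod C s, gs) \<in> Mplus M \<and>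
      F!i = map (\<lambda>g. Cmp C g s) gs" for i
    using multi_reedy_factorization[OF MR theta_mor_multimor[OF phi]] by blast
  then obtain S GS where SG: "\<And>i. i < length cs \<Longrightarrow> S i \<in> Mminus M \<and> Dom C (S i) = cs!i \<and>
      (Cod C (S i), GS i) \<in> Mplus M \<and> F!i = map (\<lambda>g. Cmp C g (S i)) (GS i)"
    by metis
  show ?thesis
  proof (rule that)
    show "theta_minus_factor C cs a S \<in> theta_minus C M" by (rule theta_minus_factor_mem[OF MR phi SG])
    show "theta_plus_factor C cs ds a S GS \<in> theta_plus C M" by (rule theta_plus_factor_mem[OF MR phi SG])
    show "fst (snd (theta_minus_factor C cs a S)) = fst (theta_plus_factor C cs ds a S GS)"
      by (simp add: theta_minus_factor_def theta_plus_factor_def)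
    show "(cs, ds, a, F) = theta_comp C (theta_plus_factor C cs ds a S GS) (theta_minus_factor C cs a S)"
      by (rule theta_comp_factors[OF MR phi SG, symmetric])
  qed
qed

lemma theta_factorization_index_eq_jump_count:
  assumes q: "(cs, es, am, Fq) \<in> theta_minus C M" and p: "(es, ds, ap, Gp) \<in> theta_plus C M"
  shows "\<And>i. i \<le> length cs \<Longrightarrow> am!i = jump_count (map (\<lambda>x. ap!x) am) i"
    and "length es = jump_count (map (\<lambda>x. ap!x) am) (length cs)"
proof -
  define a where "a = map (\<lambda>x. ap!x) am"
  have qmor: "theta_mor C (cs, es, am, Fq)" and sam: "set am = {0..length es}"
    using q by (auto simp: theta_minus_iff)
  have pmor: "theta_mor C (es, ds, ap, Gp)" and sap: "sorted_wrt (<) ap"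
    using p by (auto simp: theta_plus_iff)
  note Q = theta_morD[OF qmor] and P = theta_morD[OF pmor]
  have an: "\<And>i. i \<le> length cs \<Longrightarrow> a!i = ap!(am!i)" using Q(3) unfolding a_def by simp
  have step: "am!Suc i = am!i + (if is_jump a i then 1 else 0)" if i: "i < length cs" for i
  proof -
    have s1: "am!Suc i \<le> Suc (am!i)" using sorted_surj_nth_Suc_le[OF Q(4) sam] i Q(3) by simp
    have s2: "am!i \<le> am!Suc i" using Q(3,4) i by (simp add: sorted_nth_mono)
    have b: "am!Suc i < length ap" using Q(5)[of "Suc i"] i P(3) by simp
    have "am!i < am!Suc i \<longleftrightarrow> ap!(am!i) < ap!(am!Suc i)"
      using sap b s2 by (auto simp: sorted_wrt_iff_nth_less order.strict_iff_order)
    then have "am!i < am!Suc i \<longleftrightarrow> is_jump a i" using an[of i] an[of "Suc i"] i by (simp add: is_jump_def)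
    then show ?thesis using s1 s2 by auto
  qed
  show A: "am!i = jump_count a i" if "i \<le> length cs" for i
    using that
  proof (induction i)
    case 0 then show ?case using sorted_surj_nth_0[OF Q(4) sam] by simp
  next
    case (Suc i) then show ?case using step[of i] by (simp add: jump_count_Suc)
  qed
  show "length es = jump_count a (length cs)" using sorted_surj_last[OF Q(4) sam Q(3)] A by simp
qed

lemma theta_block_at_jump:
  assumes q: "(cs, es, am, Fq) \<in> theta_minus C M" and p: "theta_mor C (es, ds, ap, Gp)"
    and i: "i < length cs" and jump: "am!i < am!Suc i"
  shows "Fq!i = [Fq!i!0]" "Fq!i!0 \<in> Mminus M" "Dom C (Fq!i!0) = cs!i" "Cod C (Fq!i!0) = es!(am!i)"
    "am!i < length es" "theta_block C am Fq Gp i = map (\<lambda>g. Cmp C g (Fq!i!0)) (Gp!(am!i))"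
proof -
  have qmor: "theta_mor C (cs, es, am, Fq)" and sam: "set am = {0..length es}"
    and fqm: "Fq!i!0 \<in> Mminus M" using q i jump by (auto simp: theta_minus_iff)
  note Q = theta_morD[OF qmor]
  have st: "am!Suc i = Suc (am!i)" using sorted_surj_nth_Suc_le[OF Q(4) sam, of i] jump Q(3) i by simp
  have "length (Fq!i) = 1" using Q(7)[OF i] st by simp
  then show Fi: "Fq!i = [Fq!i!0]" by (cases "Fq!i") auto
  show "Fq!i!0 \<in> Mminus M" by (rule fqm)
  have "0 < am!Suc i - am!i" using st by simp
  then show "Dom C (Fq!i!0) = cs!i" "Cod C (Fq!i!0) = es!(am!i)" using Q(9,10)[OF i] by auto
  show ami: "am!i < length es" using Q(5)[of "Suc i"] i st by simp
  have "take (am!Suc i - am!i) (drop (am!i) Gp) = [Gp!(am!i)]"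
    using st ami theta_morD(6)[OF p] by (simp flip: Cons_nth_drop_Suc)
  then show "theta_block C am Fq Gp i = map (\<lambda>g. Cmp C g (Fq!i!0)) (Gp!(am!i))"
    unfolding theta_block_def by (subst Fi) simp
qed

lemma theta_factorization_unique_components:
  assumes MR: "is_multi_reedy C M"
    and q: "(cs, es, am, Fq) \<in> theta_minus C M" and p: "(es, ds, ap, Gp) \<in> theta_plus C M"
    and q': "(cs, es', am', Fq') \<in> theta_minus C M" and p': "(es', ds, ap', Gp') \<in> theta_plus C M"
    and eq: "theta_comp C (es, ds, ap, Gp) (cs, es, am, Fq) = theta_comp C (es', ds, ap', Gp') (cs, es', am', Fq')"
  shows "es = es' \<and> am = am' \<and> Fq = Fq' \<and> ap = ap' \<and> Gp = Gp'"
proof -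
  have qmor: "theta_mor C (cs, es, am, Fq)" and sam: "set am = {0..length es}" using q by (auto simp: theta_minus_iff)
  have qmor': "theta_mor C (cs, es', am', Fq')" using q' by (auto simp: theta_minus_iff)
  have pmor: "theta_mor C (es, ds, ap, Gp)" and gpm: "\<forall>l<length es. (es!l, Gp!l) \<in> Mplus M"
    using p by (auto simp: theta_plus_iff)
  have pmor': "theta_mor C (es', ds, ap', Gp')" and gpm': "\<forall>l<length es'. (es'!l, Gp'!l) \<in> Mplus M"
    using p' by (auto simp: theta_plus_iff)
  note Q = theta_morD[OF qmor] and Q' = theta_morD[OF qmor'] and P = theta_morD[OF pmor] and P' = theta_morD[OF pmor']
  define a where "a = map (\<lambda>x. ap!x) am"
  define F where "F = map (theta_block C am Fq Gp) [0..<length cs]"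
  have a': "a = map (\<lambda>x. ap'!x) am'" and F': "F = map (theta_block C am' Fq' Gp') [0..<length cs]"
    using eq unfolding a_def F_def theta_comp_eq by simp_all
  have fmor: "theta_mor C (cs, ds, a, F)"
    using theta_comp_mor[OF multi_reedyD(1)[OF MR] qmor pmor] unfolding theta_comp_eq a_def F_def .
  note ix = theta_factorization_index_eq_jump_count[OF q p] and ix' = theta_factorization_index_eq_jump_count[OF q' p']
  have amm: "am' = am" using ix(1) ix'(1) Q(3) Q'(3) unfolding a_def[symmetric] a'[symmetric] by (intro nth_equalityI) auto
  have lk: "length es' = length es" using ix(2) ix'(2) unfolding a_def[symmetric] a'[symmetric] by simp
  have apap: "ap' = ap"
  proof (rule nth_equalityI)
    show "length ap' = length ap" using P(3) P'(3) lk by simp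
    fix l assume "l < length ap'"
    then have "l \<in> set am" using sam P'(3) lk by simp
    then obtain i where i: "i < length am" "am!i = l" by (auto simp: in_set_conv_nth)
    show "ap'!l = ap!l" using arg_cong[OF a', of "\<lambda>xs. xs!i"] i amm unfolding a_def by simp
  qed
  have jc: "Fq!i = Fq'!i \<and> Gp!(am!i) = Gp'!(am!i) \<and> es!(am!i) = es'!(am!i)"
    if i: "i < length cs" and jump: "am!i < am!Suc i" for i
  proof -
    note B = theta_block_at_jump[OF q pmor i jump] and B' = theta_block_at_jump[OF q' pmor' i jump[folded amm]]
    have "F!i = map (\<lambda>g. Cmp C g (Fq!i!0)) (Gp!(am!i))" using B(6) i unfolding F_def by simp
    moreover have "F!i = map (\<lambda>g. Cmp C g (Fq'!i!0)) (Gp'!(am!i))" using B'(6) i amm unfolding F' by simp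
    moreover have "(Cod C (Fq!i!0), Gp!(am!i)) \<in> Mplus M" using gpm B(4,5) by simp
    moreover have "(Cod C (Fq'!i!0), Gp'!(am!i)) \<in> Mplus M" using gpm' B'(4,5) amm by simp
    ultimately have "Fq!i!0 = Fq'!i!0 \<and> Gp!(am!i) = Gp'!(am!i)"
      using multi_reedy_factorization_unique[OF MR theta_mor_multimor[OF fmor i]] B(2,3) B'(2,3) by blast
    then show ?thesis using B(1,4) B'(1,4) amm by (metis)
  qed
  have "Fq' = Fq"
  proof (rule nth_equalityI)
    fix i assume "i < length Fq'"
    then have i: "i < length cs" using Q'(6) by simp
    show "Fq'!i = Fq!i"
    proof (cases "am!i < am!Suc i")
      case True then show ?thesis using jc[OF i] by simp
    next
      case False
      then show ?thesis using Q(7)[OF i] Q'(7)[OF i] amm by simp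
    qed
  qed (use Q(6) Q'(6) in simp)
  moreover have "Gp!l = Gp'!l \<and> es!l = es'!l" if l: "l < length es" for l
  proof -
    obtain i where "i < length cs" "am!i = l" "am!Suc i = Suc l"
      using sorted_surj_jump[OF Q(4) sam Q(3) l] by auto
    then show ?thesis using jc by force
  qed
  then have "es' = es" "Gp' = Gp" using lk P(6) P'(6) by (auto intro: nth_equalityI)
  ultimately show ?thesis using amm apap by simp
qed

section \<open>Sections of the degeneracies of \<open>\<Theta>C\<close>\<close>

definition some_mor :: "('o,'m) cat \<Rightarrow> 'o \<Rightarrow> 'o \<Rightarrow> 'm" where
  "some_mor C c d = (SOME g. g \<in> hom C c d)"

lemma some_mor:
  assumes "\<forall>c\<in>Ob C. \<forall>d\<in>Ob C. hom C c d \<noteq> {}" "c \<in> Ob C" "d \<in> Ob C"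
  shows "some_mor C c d \<in> Mor C" "Dom C (some_mor C c d) = c" "Cod C (some_mor C c d) = d"
proof -
  have "some_mor C c d \<in> hom C c d" unfolding some_mor_def by (rule someI_ex) (use assms in blast)
  then show "some_mor C c d \<in> Mor C" "Dom C (some_mor C c d) = c" "Cod C (some_mor C c d) = d"
    by (auto simp: hom_def)
qed

text \<open>A candidate section of a degeneracy \<open>(a, F)\<close>: its index map \<open>b\<close> is a section of \<open>a\<close>, the
  component at the position \<open>jump_index a m j\<close> (where \<open>F\<close> has its only entry hitting \<open>j\<close>) is \<open>h j\<close>,
  and all other components are irrelevant for the composite, so any morphism will do; this is
  where nonempty hom-sets are needed.\<close>
definition theta_section :: "('o,'m) cat \<Rightarrow> 'o list \<Rightarrow> 'o list \<Rightarrow> nat list \<Rightarrow> nat list \<Rightarrow> (nat \<Rightarrow> 'm) \<Rightarrow> ('o,'m) tmor" where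
  "theta_section C cs ds a b h = (ds, cs, b, map (\<lambda>j. map (\<lambda>t. if b!j + t = jump_index a (length cs) j then h j
       else some_mor C (ds!j) (cs!(b!j+t))) [0..<b!Suc j - b!j]) [0..<length ds])"

lemma theta_section_mor:
  assumes hne: "\<forall>c\<in>Ob C. \<forall>d\<in>Ob C. hom C c d \<noteq> {}"
    and sig: "(cs, ds, a, F) \<in> theta_minus C M" and b: "index_section a (length cs) (length ds) b"
    and hc: "\<forall>j<length ds. h j \<in> Mor C \<and> Dom C (h j) = ds!j \<and> Cod C (h j) = cs!(jump_index a (length cs) j)"
  shows "theta_mor C (theta_section C cs ds a b h)"
proof -
  have phi: "theta_mor C (cs, ds, a, F)" using sig by (simp add: theta_minus_iff)
  note P = theta_morD[OF phi]
  let ?m = "length cs" and ?n = "length ds"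
  have lb: "length b = Suc ?n" and bc: "\<forall>j\<le>?n. b!j \<le> ?m \<and> a!(b!j) = j"
    using b by (auto simp: index_section_def)
  have sb: "sorted b" unfolding sorted_iff_nth_mono
  proof (intro allI impI)
    fix i j assume ij: "i \<le> j" "j < length b"
    show "b!i \<le> b!j"
    proof (rule ccontr)
      assume lt: "\<not> b!i \<le> b!j"
      have bi: "b!i \<le> ?m" "a!(b!i) = i" "a!(b!j) = j" using bc ij lb by auto
      have "b!j \<le> b!i" "b!i < length a" using lt bi(1) P(3) by simp_all
      then have "a!(b!j) \<le> a!(b!i)" using sorted_nth_mono[OF P(4)] by blast
      then have "i = j" using bi ij(1) by simp
      then show False using lt by simp
    qed
  qed
  show ?thesis unfolding theta_section_def theta_mor_iff
  proof (intro conjI allI impI)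
    show "set ds \<subseteq> Ob C" "set cs \<subseteq> Ob C" using P(1,2) by auto
    show "length b = Suc ?n" by (rule lb)
    show "sorted b" by (rule sb)
    show "\<forall>x\<in>set b. x \<le> ?m" using bc lb by (auto simp: in_set_conv_nth)
    let ?H = "map (\<lambda>j. map (\<lambda>t. if b!j + t = jump_index a ?m j then h j
       else some_mor C (ds!j) (cs!(b!j+t))) [0..<b!Suc j - b!j]) [0..<?n]"
    show "length ?H = ?n" by simp
    fix j assume j: "j < ?n"
    show "length (?H!j) = b!Suc j - b!j" using j by simp
    fix t assume t: "t < length (?H!j)"
    then have t': "t < b!Suc j - b!j" using j by simp
    have "b!Suc j \<le> ?m" using bc j by simp
    then have "b!j + t < ?m" using t' by arith
    then have ob: "ds!j \<in> Ob C" "cs!(b!j+t) \<in> Ob C" using P(1,2) j by (auto simp: subset_iff)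
    have Hn: "?H!j!t = (if b!j + t = jump_index a ?m j then h j else some_mor C (ds!j) (cs!(b!j+t)))"
      using j t' by simp
    show "?H!j!t \<in> Mor C" "Dom C (?H!j!t) = ds!j" "Cod C (?H!j!t) = cs!(b!j + t)"
      using Hn some_mor[OF hne ob] hc j by auto
  qed
qed

lemma theta_comp_theta_section:
  assumes hne: "\<forall>c\<in>Ob C. \<forall>d\<in>Ob C. hom C c d \<noteq> {}"
    and sig: "(cs, ds, a, F) \<in> theta_minus C M" and b: "index_section a (length cs) (length ds) b"
    and hc: "\<forall>j<length ds. h j \<in> Mor C \<and> Dom C (h j) = ds!j \<and> Cod C (h j) = cs!(jump_index a (length cs) j)"
  shows "theta_comp C (cs, ds, a, F) (theta_section C cs ds a b h) =
     (ds, ds, map (\<lambda>x. a!x) b, map (\<lambda>j. [Cmp C (F!(jump_index a (length cs) j)!0) (h j)]) [0..<length ds])"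
proof -
  let ?m = "length cs" and ?n = "length ds"
  define H where "H = map (\<lambda>j. map (\<lambda>t. if b!j + t = jump_index a ?m j then h j
       else some_mor C (ds!j) (cs!(b!j+t))) [0..<b!Suc j - b!j]) [0..<?n]"
  have ts: "theta_section C cs ds a b h = (ds, cs, b, H)" unfolding theta_section_def H_def by simp
  have bm: "theta_mor C (ds, cs, b, H)" using theta_section_mor[OF hne sig b hc] ts by simp
  have phi: "theta_mor C (cs, ds, a, F)" and sa: "set a = {0..length ds}" using sig by (auto simp: theta_minus_iff)
  have bc: "\<forall>j\<le>?n. b!j \<le> ?m \<and> a!(b!j) = j" using b by (simp add: index_section_def)
  note P = theta_morD[OF phi]
  have "theta_block C b H F j = [Cmp C (F!(jump_index a ?m j)!0) (h j)]" if j: "j < ?n" for j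
  proof -
    have L: "length (theta_block C b H F j) = 1" using theta_block_length[OF bm phi j] bc j by simp
    have k0: "0 < a!(b!Suc j) - a!(b!j)" using bc j by simp
    obtain j' l where E: "b!j \<le> j'" "j' < b!Suc j" "j' < ?m" "l < a!Suc j' - a!j'" "0 = a!j' - a!(b!j) + l"
      "theta_block C b H F j ! 0 = Cmp C (F!j'!l) (H!j!(j' - b!j))"
      by (rule theta_block_entry[OF bm phi j k0])
    have "a!(b!j) \<le> a!j'" using E(1,3) P(3,4) by (simp add: sorted_nth_mono)
    then have aj: "a!j' = j" "l = 0" using E(5) bc j by auto
    have "a!j' < a!Suc j'" using E(4) by simp
    then have jxe: "jump_index a ?m j = j'" using jump_index_unique[OF P(4) sa P(3) E(3)] aj by simp
    have "H!j!(j' - b!j) = h j" unfolding H_def using j E(1,2) jxe by simp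
    then show ?thesis using L E(6) aj jxe by (cases "theta_block C b H F j") auto
  qed
  then show ?thesis unfolding ts theta_comp_eq by simp
qed

lemma theta_section_in_Gamma_iff:
  assumes hne: "\<forall>c\<in>Ob C. \<forall>d\<in>Ob C. hom C c d \<noteq> {}"
    and sig: "(cs, ds, a, F) \<in> theta_minus C M" and b: "index_section a (length cs) (length ds) b"
    and hc: "\<forall>j<length ds. h j \<in> Mor C \<and> Dom C (h j) = ds!j \<and> Cod C (h j) = cs!(jump_index a (length cs) j)"
  shows "theta_section C cs ds a b h \<in> Gamma (ThetaCat C) (cs, ds, a, F) \<longleftrightarrow>
     (\<forall>j<length ds. Cmp C (F!(jump_index a (length cs) j)!0) (h j) = Idn C (ds!j))"
proof -
  let ?G = "map (\<lambda>j. [Cmp C (F!(jump_index a (length cs) j)!0) (h j)]) [0..<length ds]"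
  obtain H where ts: "theta_section C cs ds a b h = (ds, cs, b, H)" unfolding theta_section_def by blast
  have "map (\<lambda>x. a!x) b = [0..<Suc (length ds)]"
    using b by (intro nth_equalityI) (auto simp: index_section_def simp del: upt_Suc)
  then have "theta_comp C (cs, ds, a, F) (theta_section C cs ds a b h) = theta_id C ds \<longleftrightarrow>
      ?G = map (\<lambda>c. [Idn C c]) ds"
    unfolding theta_comp_theta_section[OF hne sig b hc] theta_id_def by simp
  also have "\<dots> \<longleftrightarrow> (\<forall>j<length ds. Cmp C (F!(jump_index a (length cs) j)!0) (h j) = Idn C (ds!j))"
  proof
    assume eq: "?G = map (\<lambda>c. [Idn C c]) ds"
    show "\<forall>j<length ds. Cmp C (F!(jump_index a (length cs) j)!0) (h j) = Idn C (ds!j)"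
    proof (intro allI impI)
      fix j assume j: "j < length ds"
      have "?G ! j = map (\<lambda>c. [Idn C c]) ds ! j" using eq by simp
      then show "Cmp C (F!(jump_index a (length cs) j)!0) (h j) = Idn C (ds!j)" using j by simp
    qed
  qed (intro nth_equalityI; simp)
  finally show ?thesis
    using theta_section_mor[OF hne sig b hc] unfolding Gamma_ThetaCat_iff ts by simp
qed

lemma theta_minus_jump_component:
  assumes sig: "(cs, ds, a, F) \<in> theta_minus C M" and j: "j < length ds"
  shows "F!(jump_index a (length cs) j)!0 \<in> Mminus M" "F!(jump_index a (length cs) j)!0 \<in> Mor C"
    "Dom C (F!(jump_index a (length cs) j)!0) = cs!(jump_index a (length cs) j)"
    "Cod C (F!(jump_index a (length cs) j)!0) = ds!j"
proof -
  have phi: "theta_mor C (cs, ds, a, F)" and sa: "set a = {0..length ds}"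
    and fm: "\<forall>i<length cs. a ! i < a ! Suc i \<longrightarrow> F ! i ! 0 \<in> Mminus M" using sig by (auto simp: theta_minus_iff)
  note P = theta_morD[OF phi] and J = jump_index[OF P(4) sa P(3) j]
  show "F!(jump_index a (length cs) j)!0 \<in> Mminus M" using fm J by simp
  have "0 < a!Suc (jump_index a (length cs) j) - a!(jump_index a (length cs) j)" using J by simp
  then show "F!(jump_index a (length cs) j)!0 \<in> Mor C"
    "Dom C (F!(jump_index a (length cs) j)!0) = cs!(jump_index a (length cs) j)"
    "Cod C (F!(jump_index a (length cs) j)!0) = ds!j" using P(8,9,10)[OF J(1)] J by auto
qed

lemma Gamma_jump_component_hom:
  assumes sig: "(cs, ds, a, F) \<in> theta_minus C M"
    and h: "\<forall>j<length ds. h j \<in> Gamma C (F!(jump_index a (length cs) j)!0)"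
  shows "\<forall>j<length ds. h j \<in> Mor C \<and> Dom C (h j) = ds!j \<and> Cod C (h j) = cs!(jump_index a (length cs) j)"
proof (intro allI impI)
  fix j assume j: "j < length ds"
  show "h j \<in> Mor C \<and> Dom C (h j) = ds!j \<and> Cod C (h j) = cs!(jump_index a (length cs) j)"
    using GammaD(1-3)[OF h[rule_format, OF j]] theta_minus_jump_component(3,4)[OF sig j] by simp
qed

lemma theta_section_in_Gamma:
  assumes hne: "\<forall>c\<in>Ob C. \<forall>d\<in>Ob C. hom C c d \<noteq> {}"
    and sig: "(cs, ds, a, F) \<in> theta_minus C M" and b: "index_section a (length cs) (length ds) b"
    and h: "\<forall>j<length ds. h j \<in> Gamma C (F!(jump_index a (length cs) j)!0)"
  shows "theta_section C cs ds a b h \<in> Gamma (ThetaCat C) (cs, ds, a, F)"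
proof -
  have "Cmp C (F!(jump_index a (length cs) j)!0) (h j) = Idn C (ds!j)" if j: "j < length ds" for j
    using GammaD(4)[OF h[rule_format, OF j]] theta_minus_jump_component(4)[OF sig j] by simp
  then show ?thesis using theta_section_in_Gamma_iff[OF hne sig b Gamma_jump_component_hom[OF sig h]] by blast
qed

lemma theta_minus_index_section:
  assumes "(cs, ds, a, F) \<in> theta_minus C M"
  shows "index_section a (length cs) (length ds) (last_preimages a (length cs) (length ds))"
    "index_section a (length cs) (length ds) (first_preimages a (length cs) (length ds))"
  using assms index_section_last_preimages index_section_first_preimages
  by (auto simp: theta_minus_iff theta_mor_iff)

definition chosen_section :: "('o,'m) cat \<Rightarrow> 'm list list \<Rightarrow> nat list \<Rightarrow> nat \<Rightarrow> nat \<Rightarrow> 'm" where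
  "chosen_section C F a m j = (SOME g. g \<in> Gamma C (F!(jump_index a m j)!0))"

lemma chosen_section_in_Gamma:
  assumes ez: "\<forall>s\<in>Mminus M. Gamma C s \<noteq> {}" and sig: "(cs, ds, a, F) \<in> theta_minus C M"
  shows "\<forall>j<length ds. chosen_section C F a (length cs) j \<in> Gamma C (F!(jump_index a (length cs) j)!0)"
  unfolding chosen_section_def using ez theta_minus_jump_component(1)[OF sig] by (metis some_in_eq)

lemma Gamma_ThetaCat_nonempty:
  assumes hne: "\<forall>c\<in>Ob C. \<forall>d\<in>Ob C. hom C c d \<noteq> {}"
    and ez: "\<forall>s\<in>Mminus M. Gamma C s \<noteq> {}" and sig: "s \<in> theta_minus C M"
  shows "Gamma (ThetaCat C) s \<noteq> {}"
proof -
  obtain cs ds a F where s: "s = (cs, ds, a, F)" by (cases s)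
  note sig' = sig[unfolded s]
  show ?thesis using theta_section_in_Gamma[OF hne sig' theta_minus_index_section(1)[OF sig']
      chosen_section_in_Gamma[OF ez sig']] s by blast
qed

text \<open>Changing the chosen section at a single jump shows that \<open>\<Gamma>\<close> of a degeneracy of \<open>\<Theta>C\<close>
  controls \<open>\<Gamma>\<close> of each of its components in \<open>C\<^sup>-\<close>.\<close>
lemma Gamma_ThetaCat_component_subset:
  assumes hne: "\<forall>c\<in>Ob C. \<forall>d\<in>Ob C. hom C c d \<noteq> {}" and ez: "\<forall>s\<in>Mminus M. Gamma C s \<noteq> {}"
    and sig: "(cs, ds, a, F) \<in> theta_minus C M" and sig': "(cs, ds, a, F') \<in> theta_minus C M"
    and sub: "Gamma (ThetaCat C) (cs, ds, a, F) \<subseteq> Gamma (ThetaCat C) (cs, ds, a, F')"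
    and i: "i < length cs" and jump: "a!i < a!Suc i"
  shows "Gamma C (F!i!0) \<subseteq> Gamma C (F'!i!0)"
proof
  fix h0 assume h0: "h0 \<in> Gamma C (F!i!0)"
  let ?m = "length cs" and ?n = "length ds"
  have sa: "sorted a" "set a = {0..?n}" "length a = Suc ?m" using sig by (auto simp: theta_minus_iff theta_mor_iff)
  define j where "j = a!i"
  have jn: "j < ?n" "jump_index a ?m j = i" using jump_index_unique[OF sa i jump] unfolding j_def by auto
  define h where "h j' = (if j' = j then h0 else chosen_section C F a ?m j')" for j'
  have hg: "\<forall>j'<?n. h j' \<in> Gamma C (F!(jump_index a ?m j')!0)"
    using chosen_section_in_Gamma[OF ez sig] h0 jn unfolding h_def by auto
  note b = theta_minus_index_section(1)[OF sig]
  have "theta_section C cs ds a (last_preimages a ?m ?n) h \<in> Gamma (ThetaCat C) (cs, ds, a, F')"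
    using theta_section_in_Gamma[OF hne sig b hg] sub by blast
  then have "\<forall>j'<?n. Cmp C (F'!(jump_index a ?m j')!0) (h j') = Idn C (ds!j')"
    using theta_section_in_Gamma_iff[OF hne sig' b Gamma_jump_component_hom[OF sig hg]] by blast
  then have "Cmp C (F'!i!0) h0 = Idn C (ds!j)" using jn unfolding h_def by auto
  then show "h0 \<in> Gamma C (F'!i!0)" unfolding Gamma_def
    using GammaD[OF h0] theta_minus_jump_component(3,4)[OF sig jn(1)] theta_minus_jump_component(3,4)[OF sig' jn(1)]
    jn by simp
qed

lemma Gamma_ThetaCat_index:
  assumes "theta_section C cs ds a b h \<in> Gamma (ThetaCat C) (cs, ds, a', F')"
    and "length b = Suc (length ds)" "j \<le> length ds"
  shows "a'!(b!j) = j"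
proof -
  have "theta_comp C (cs, ds, a', F') (theta_section C cs ds a b h) = theta_id C ds"
    using assms(1) unfolding Gamma_ThetaCat_iff by (simp add: theta_section_def)
  then have "map (\<lambda>x. a'!x) b = [0..<Suc (length ds)]"
    unfolding theta_section_def theta_comp_eq theta_id_def by simp
  then have "map (\<lambda>x. a'!x) b ! j = [0..<Suc (length ds)] ! j" by simp
  then show ?thesis using assms(2,3) by (simp only: nth_map nth_upt)
qed

text \<open>The largest and the smallest section of \<open>a\<close> both underlie sections of \<open>(a, F)\<close>;
  if they also give sections of \<open>(a', F')\<close>, then \<open>a'\<close> agrees with \<open>a\<close> at both ends of every
  fibre of \<open>a\<close>, hence everywhere by monotonicity.\<close>
lemma Gamma_ThetaCat_subset_index_eq:
  assumes hne: "\<forall>c\<in>Ob C. \<forall>d\<in>Ob C. hom C c d \<noteq> {}" and ez: "\<forall>s\<in>Mminus M. Gamma C s \<noteq> {}"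
    and sig: "(cs, ds, a, F) \<in> theta_minus C M" and sig': "(cs, ds, a', F') \<in> theta_minus C M"
    and sub: "Gamma (ThetaCat C) (cs, ds, a, F) \<subseteq> Gamma (ThetaCat C) (cs, ds, a', F')"
  shows "a' = a"
proof -
  let ?m = "length cs" and ?n = "length ds"
  have sa: "sorted a" "set a = {0..?n}" "length a = Suc ?m" using sig by (auto simp: theta_minus_iff theta_mor_iff)
  have sa': "sorted a'" "length a' = Suc ?m" using sig' by (auto simp: theta_minus_iff theta_mor_iff)
  note bl = theta_minus_index_section(1)[OF sig] and bf = theta_minus_index_section(2)[OF sig]
  note hg = chosen_section_in_Gamma[OF ez sig]
  have gl: "theta_section C cs ds a (last_preimages a ?m ?n) (chosen_section C F a ?m) \<in> Gamma (ThetaCat C) (cs, ds, a', F')"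
    using theta_section_in_Gamma[OF hne sig bl hg] sub by blast
  have gf: "theta_section C cs ds a (first_preimages a ?m ?n) (chosen_section C F a ?m) \<in> Gamma (ThetaCat C) (cs, ds, a', F')"
    using theta_section_in_Gamma[OF hne sig bf hg] sub by blast
  show "a' = a"
  proof (rule nth_equalityI)
    show "length a' = length a" using sa(3) sa'(2) by simp
    fix i assume "i < length a'"
    then have i: "i \<le> ?m" using sa'(2) by simp
    have an: "a!i \<le> ?n" using nth_mem[of i a] sa i by auto
    note bracket = preimages_bracket[OF sa i]
    have l1: "a'!(last_preimages a ?m ?n ! (a!i)) = a!i"
      by (rule Gamma_ThetaCat_index[OF gl _ an]) (use bl in \<open>simp add: index_section_def\<close>)
    have l2: "a'!(first_preimages a ?m ?n ! (a!i)) = a!i"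
      by (rule Gamma_ThetaCat_index[OF gf _ an]) (use bf in \<open>simp add: index_section_def\<close>)
    have "last_preimages a ?m ?n ! (a!i) \<le> ?m" using bl an by (simp add: index_section_def)
    then have "a'!i \<le> a'!(last_preimages a ?m ?n ! (a!i))" using bracket(2) sa' by (simp add: sorted_nth_mono)
    moreover have "a'!(first_preimages a ?m ?n ! (a!i)) \<le> a'!i" using bracket(1) i sa' by (simp add: sorted_nth_mono)
    ultimately show "a'!i = a!i" using l1 l2 by simp
  qed
qed

lemma Gamma_ThetaCat_inj:
  assumes hne: "\<forall>c\<in>Ob C. \<forall>d\<in>Ob C. hom C c d \<noteq> {}" and ez: "\<forall>s\<in>Mminus M. Gamma C s \<noteq> {}"
    and ez_inj: "\<forall>s\<in>Mminus M. \<forall>s'\<in>Mminus M. Dom C s = Dom C s' \<and> Cod C s = Cod C s' \<and>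
        Gamma C s = Gamma C s' \<longrightarrow> s = s'"
    and sig: "(cs, ds, a, F) \<in> theta_minus C M" and sig': "(cs, ds, a', F') \<in> theta_minus C M"
    and eq: "Gamma (ThetaCat C) (cs, ds, a, F) = Gamma (ThetaCat C) (cs, ds, a', F')"
  shows "(cs, ds, a, F) = (cs, ds, a', F')"
proof -
  have aa: "a' = a" using Gamma_ThetaCat_subset_index_eq[OF hne ez sig sig'] eq by simp
  note sig'' = sig'[unfolded aa]
  have phi: "theta_mor C (cs, ds, a, F)" and sa: "set a = {0..length ds}" using sig by (auto simp: theta_minus_iff)
  have phi': "theta_mor C (cs, ds, a, F')" using sig'' by (simp add: theta_minus_iff)
  note P = theta_morD[OF phi] and P' = theta_morD[OF phi']
  have "F'!i = F!i" if i: "i < length cs" for i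
  proof (cases "a!i < a!Suc i")
    case False
    then show ?thesis using P(7)[OF i] P'(7)[OF i] by simp
  next
    case True
    have "Gamma C (F!i!0) = Gamma C (F'!i!0)"
      using Gamma_ThetaCat_component_subset[OF hne ez sig sig'' _ i True]
        Gamma_ThetaCat_component_subset[OF hne ez sig'' sig _ i True] eq aa by blast
    moreover have jn: "a!i < length ds" "jump_index a (length cs) (a!i) = i"
      using jump_index_unique[OF P(4) sa P(3) i True] by auto
    ultimately have "F!i!0 = F'!i!0"
      using ez_inj theta_minus_jump_component[OF sig jn(1)] theta_minus_jump_component[OF sig'' jn(1)] jn(2) by auto
    moreover have "length (F!i) = 1" "length (F'!i) = 1"
      using P(7)[OF i] P'(7)[OF i] sorted_surj_nth_Suc_le[OF P(4) sa, of i] True P(3) i by auto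
    ultimately show ?thesis by (metis length_0_conv length_Suc_conv nth_Cons_0 One_nat_def)
  qed
  then have "F' = F" using P(6) P'(6) by (intro nth_equalityI) auto
  then show ?thesis using aa by simp
qed

lemma theta_factorization_unique:
  assumes MR: "is_multi_reedy C M"
    and q: "q \<in> theta_minus C M" and p: "p \<in> theta_plus C M" and qp: "fst (snd q) = fst p"
    and q': "q' \<in> theta_minus C M" and p': "p' \<in> theta_plus C M" and qp': "fst (snd q') = fst p'"
    and eq: "theta_comp C p q = theta_comp C p' q'"
  shows "p = p' \<and> q = q'"
proof -
  obtain cs es am Fq ds ap Gp where qe: "q = (cs, es, am, Fq)" and pe: "p = (es, ds, ap, Gp)"
    using qp by (cases q, cases p) auto
  obtain cs' es' am' Fq' ds' ap' Gp' where qe': "q' = (cs', es', am', Fq')" and pe': "p' = (es', ds', ap', Gp')"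
    using qp' by (cases q', cases p') auto
  have "cs' = cs" "ds' = ds" using eq unfolding qe pe qe' pe' theta_comp_eq by simp_all
  then show ?thesis
    using theta_factorization_unique_components[OF MR q[unfolded qe] p[unfolded pe]] q' p' eq qe pe qe' pe' by auto
qed

lemma is_reedy_ThetaReedy:
  assumes MR: "is_multi_reedy C M"
  shows "is_reedy (ThetaCat C) (ThetaReedy C M)"
  unfolding is_reedy_def ThetaReedy_simps
proof (intro conjI ballI impI allI)
  show "is_cat (ThetaCat C)" by (rule is_cat_ThetaCat[OF multi_reedyD(1)[OF MR]])
  show "wide_subcat (ThetaCat C) (theta_minus C M)" by (rule wide_subcat_theta_minus[OF MR])
  show "wide_subcat (ThetaCat C) (theta_plus C M)" by (rule wide_subcat_theta_plus[OF MR])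
next
  fix f assume "f \<in> Mor (ThetaCat C)"
  moreover obtain cs ds a F where "f = (cs, ds, a, F)" by (cases f)
  ultimately show "\<exists>p q. q \<in> theta_minus C M \<and> p \<in> theta_plus C M \<and>
      Cod (ThetaCat C) q = Dom (ThetaCat C) p \<and> f = Cmp (ThetaCat C) p q"
    using theta_factorization_exists[OF MR] unfolding ThetaCat_simps by (metis mem_Collect_eq)
next
  fix f p q p' q'
  assume "q \<in> theta_minus C M \<and> p \<in> theta_plus C M \<and> Cod (ThetaCat C) q = Dom (ThetaCat C) p \<and>
      f = Cmp (ThetaCat C) p q \<and> q' \<in> theta_minus C M \<and> p' \<in> theta_plus C M \<and>
      Cod (ThetaCat C) q' = Dom (ThetaCat C) p' \<and> f = Cmp (ThetaCat C) p' q'"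
  then show "p = p'" "q = q'" using theta_factorization_unique[OF MR] unfolding ThetaCat_simps by metis+
next
  fix f assume "f \<in> theta_plus C M"
  moreover obtain cs ds a F where "f = (cs, ds, a, F)" by (cases f)
  ultimately show "theta_deg M (Dom (ThetaCat C) f) \<le> theta_deg M (Cod (ThetaCat C) f)"
    "theta_deg M (Dom (ThetaCat C) f) = theta_deg M (Cod (ThetaCat C) f) \<Longrightarrow> f = Idn (ThetaCat C) (Dom (ThetaCat C) f)"
    using theta_plus_deg[OF MR] unfolding ThetaCat_simps by auto
next
  fix f assume "f \<in> theta_minus C M"
  moreover obtain cs ds a F where "f = (cs, ds, a, F)" by (cases f)
  ultimately show "theta_deg M (Cod (ThetaCat C) f) \<le> theta_deg M (Dom (ThetaCat C) f)"
    "theta_deg M (Cod (ThetaCat C) f) = theta_deg M (Dom (ThetaCat C) f) \<Longrightarrow> f = Idn (ThetaCat C) (Dom (ThetaCat C) f)"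
    using theta_minus_deg[OF MR] unfolding ThetaCat_simps by auto
qed

theorem mainTheorem10:
  fixes C :: "('o, 'm) cat" and M :: "('o, 'm) mreedy_str"
  assumes "is_multi_reedy C M"
    and "\<forall>c\<in>Ob C. \<forall>d\<in>Ob C. hom C c d \<noteq> {}"
    and "is_ez_reedy C (underlying_reedy C M)"
  shows "is_ez_reedy (ThetaCat C) (ThetaReedy C M)"
proof -
  have ez: "\<forall>s\<in>Mminus M. Gamma C s \<noteq> {}"
    and ez_inj: "\<forall>s\<in>Mminus M. \<forall>s'\<in>Mminus M. Dom C s = Dom C s' \<and> Cod C s = Cod C s' \<and>
        Gamma C s = Gamma C s' \<longrightarrow> s = s'"
    using assms(3) unfolding is_ez_reedy_def underlying_reedy_def by auto
  have "s = s'" if "s \<in> theta_minus C M" "s' \<in> theta_minus C M" "fst s = fst s'" "fst (snd s) = fst (snd s')"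
    "Gamma (ThetaCat C) s = Gamma (ThetaCat C) s'" for s s'
    using that Gamma_ThetaCat_inj[OF assms(2) ez ez_inj] by (cases s, cases s') auto
  then show ?thesis
    unfolding is_ez_reedy_def ThetaReedy_simps ThetaCat_simps
    using is_reedy_ThetaReedy[OF assms(1)] Gamma_ThetaCat_nonempty[OF assms(2) ez] by blast
qed

end
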